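(* Let $B\in\mathbb{Z}^{n\times m}$, $C\in\mathbb{Z}^{m\times n}$ and the box $\mathcal{D}$ be as in the context, and suppose now that $J_2=\mathrm{diag}(a_1,\dots,a_n)$ and $J_4=\mathrm{diag}(b_1,\dots,b_n)$ are uncertain diagonal matrices with $a_i\in[a_i^-,a_i^+]$, $b_i\in[b_i^-,b_i^+]$ (finite intervals); let $\mathcal{J}$ denote the set of admissible pairs $(J_2,J_4)$. Assume (A1) holds and (A2) holds for every $(J_2,J_4)\in\mathcal{J}$. Define $\Psi^-(\kappa)=\min_{\Delta\in\mathcal{D},(J_2,J_4)\in\mathcal{J}}\det[-(B\Delta C+\kappa^2J_2+\kappa^4J_4)]$ and $\Psi^+(\kappa)=\max_{\Delta\in\mathcal{D},(J_2,J_4)\in\mathcal{J}}\det[-(B\Delta C+\kappa^2J_2+\kappa^4J_4)]$. Then: (i) if the system exhibits microphase separation for some $(\Delta,J_2,J_4)\in\mathcal{D}\times\mathcal{J}$, then $\Psi^+$ is initially positive; (ii) if either $\Psi^-$ or $\Psi^+$ is initially positive and has a negative sign change, then the system exhibits microphase separation for some $(\Delta,J_2,J_4)\in\mathcal{D}\times\mathcal{J}$; (iii) if $\Psi^-$ is initially positive and $\Psi^+$ has a negative sign change, then the system exhibits microphase separation for every $(\Delta,J_2,J_4)\in\mathcal{D}\times\mathcal{J}$; (iv) for each $\kappa\ge0$, $\Psi^-(\kappa)$ and $\Psi^+(\kappa)$ equal respectively the minimum and maximum of $\det[-(B\Delta C+\kappa^2J_2+\kappa^4J_4)]$ over the finitely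 many vertices of the box $\mathcal{D}\times\mathcal{J}$ (all $\Delta_j\in\{\Delta_j^-,\Delta_j^+\}$, $a_i\in\{a_i^-,a_i^+\}$, $b_i\in\{b_i^-,b_i^+\}$).
   Context: Let $n,m\ge 1$. Given bounds $0\le \Delta_j^-\le \Delta_j^+<\infty$ ($j=1,\dots,m$), $\mathcal{D}$ is the set of diagonal matrices $\Delta=\mathrm{diag}(\Delta_1,\dots,\Delta_m)$ with $\Delta_j^-\le\Delta_j\le\Delta_j^+$. Assumption (A1): for every $\Delta\in\mathcal{D}$, $B\Delta C$ is singular and has $n-1$ eigenvalues (with multiplicity) with negative real part, and there is a nonzero $v\ge0$ with $v^\top B=0$. Assumption (A2) for a pair $(J_2,J_4)$ of symmetric matrices: $J_2$ is indefinite, $J_4$ is negative semidefinite, and there exists $\bar\kappa$ with $\bar\kappa^2J_2+\bar\kappa^4J_4$ negative definite. For real $\kappa\ge0$ let $\rho(\Delta,J_2,J_4,\kappa)$ be the spectral abscissa (maximum real part of eigenvalues) of $B\Delta C+\kappa^2J_2+\kappa^4J_4$. A continuous function $f$ on $[0,\infty)$ is initially positive if there is $\hat\kappa>0$ with $f>0$ on $(0,\hat\kappa)$; it has a negative sign change if $f(\kappa_1)>0>f(\kappa_2)$ for some $\kappa_1<\kappa_2$. The system exhibits microphase separation for $(\Delta,J_2,J_4)$ if there is $\hat\kappa>0$ with $\rho(\Delta,J_2,J_4,\kappa)<0$ for all $\kappa\in(0,\hat\kappa)$ and there are $\hat\kappa<\kappa_1<\kappa_2$ with $\rho(\Delta,J_2,J_4,\kappa_1)>0$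 and $\rho(\Delta,J_2,J_4,\kappa_2)<0$. *)

theory Defs
  imports Complex_Main "Jordan_Normal_Form.Jordan_Normal_Form"
begin

definition sysmat :: "int mat \<Rightarrow> int mat \<Rightarrow> real mat \<Rightarrow> real mat \<Rightarrow> real mat \<Rightarrow> real \<Rightarrow> real mat" where
  "sysmat B C \<Delta> J2 J4 \<kappa> =
     map_mat real_of_int B * \<Delta> * map_mat real_of_int C + (\<kappa>^2) \<cdot>\<^sub>m J2 + (\<kappa>^4) \<cdot>\<^sub>m J4"

definition ceig :: "real mat \<Rightarrow> complex \<Rightarrow> bool" where
  "ceig A z = eigenvalue (map_mat complex_of_real A) z"

definition alg_mult :: "real mat \<Rightarrow> complex \<Rightarrow> nat" where
  "alg_mult A z = order z (char_poly (map_mat complex_of_real A))"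

definition spectral_abscissa :: "real mat \<Rightarrow> real" where
  "spectral_abscissa A = Max {Re z | z. ceig A z}"

definition rho :: "int mat \<Rightarrow> int mat \<Rightarrow> real mat \<Rightarrow> real mat \<Rightarrow> real mat \<Rightarrow> real \<Rightarrow> real" where
  "rho B C \<Delta> J2 J4 \<kappa> = spectral_abscissa (sysmat B C \<Delta> J2 J4 \<kappa>)"

definition boxD :: "nat \<Rightarrow> (nat \<Rightarrow> real) \<Rightarrow> (nat \<Rightarrow> real) \<Rightarrow> real mat set" where
  "boxD m Dlo Dhi = {mat_diag m d | d. \<forall>j<m. Dlo j \<le> d j \<and> d j \<le> Dhi j}"

definition vertD :: "nat \<Rightarrow> (nat \<Rightarrow> real) \<Rightarrow> (nat \<Rightarrow> real) \<Rightarrow> real mat set" where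
  "vertD m Dlo Dhi = {mat_diag m d | d. \<forall>j<m. d j \<in> {Dlo j, Dhi j}}"

definition boxJ :: "nat \<Rightarrow> (nat \<Rightarrow> real) \<Rightarrow> (nat \<Rightarrow> real) \<Rightarrow> (nat \<Rightarrow> real) \<Rightarrow> (nat \<Rightarrow> real)
    \<Rightarrow> (real mat \<times> real mat) set" where
  "boxJ n alo ahi blo bhi = {(mat_diag n a, mat_diag n b) | a b.
      \<forall>i<n. alo i \<le> a i \<and> a i \<le> ahi i \<and> blo i \<le> b i \<and> b i \<le> bhi i}"

definition vertJ :: "nat \<Rightarrow> (nat \<Rightarrow> real) \<Rightarrow> (nat \<Rightarrow> real) \<Rightarrow> (nat \<Rightarrow> real) \<Rightarrow> (nat \<Rightarrow> real)
    \<Rightarrow> (real mat \<times> real mat) set" where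
  "vertJ n alo ahi blo bhi = {(mat_diag n a, mat_diag n b) | a b.
      \<forall>i<n. a i \<in> {alo i, ahi i} \<and> b i \<in> {blo i, bhi i}}"

definition A1 :: "nat \<Rightarrow> nat \<Rightarrow> int mat \<Rightarrow> int mat \<Rightarrow> real mat set \<Rightarrow> bool" where
  "A1 n m B C Ds \<longleftrightarrow>
     (\<forall>\<Delta>\<in>Ds. let A = map_mat real_of_int B * \<Delta> * map_mat real_of_int C in
        det A = 0 \<and> (\<Sum>z\<in>{z. ceig A z \<and> Re z < 0}. alg_mult A z) = n - 1) \<and>
     (\<exists>v\<in>carrier_vec n. v \<noteq> 0\<^sub>v n \<and> (\<forall>i<n. v $ i \<ge> 0) \<and>
        transpose_mat (map_mat real_of_int B) *\<^sub>v v = 0\<^sub>v m)"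

definition qform :: "real mat \<Rightarrow> real vec \<Rightarrow> real" where
  "qform A x = x \<bullet> (A *\<^sub>v x)"

definition indefinite :: "nat \<Rightarrow> real mat \<Rightarrow> bool" where
  "indefinite n A \<longleftrightarrow> (\<exists>x\<in>carrier_vec n. qform A x > 0) \<and> (\<exists>y\<in>carrier_vec n. qform A y < 0)"

definition neg_semidef :: "nat \<Rightarrow> real mat \<Rightarrow> bool" where
  "neg_semidef n A \<longleftrightarrow> (\<forall>x\<in>carrier_vec n. qform A x \<le> 0)"

definition neg_def :: "nat \<Rightarrow> real mat \<Rightarrow> bool" where
  "neg_def n A \<longleftrightarrow> (\<forall>x\<in>carrier_vec n. x \<noteq> 0\<^sub>v n \<longrightarrow> qform A x < 0)"

definition A2 :: "nat \<Rightarrow> real mat \<Rightarrow> real mat \<Rightarrow> bool" where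
  "A2 n J2 J4 \<longleftrightarrow> J2 \<in> carrier_mat n n \<and> J4 \<in> carrier_mat n n \<and>
     transpose_mat J2 = J2 \<and> transpose_mat J4 = J4 \<and>
     indefinite n J2 \<and> neg_semidef n J4 \<and>
     (\<exists>k. neg_def n (k^2 \<cdot>\<^sub>m J2 + k^4 \<cdot>\<^sub>m J4))"

definition initially_positive :: "(real \<Rightarrow> real) \<Rightarrow> bool" where
  "initially_positive f \<longleftrightarrow> (\<exists>k>0. \<forall>\<kappa>. 0 < \<kappa> \<and> \<kappa> < k \<longrightarrow> f \<kappa> > 0)"

definition neg_sign_change :: "(real \<Rightarrow> real) \<Rightarrow> bool" where
  "neg_sign_change f \<longleftrightarrow> (\<exists>k1 k2. 0 \<le> k1 \<and> k1 < k2 \<and> f k1 > 0 \<and> f k2 < 0)"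

definition microphase :: "int mat \<Rightarrow> int mat \<Rightarrow> real mat \<Rightarrow> real mat \<Rightarrow> real mat \<Rightarrow> bool" where
  "microphase B C \<Delta> J2 J4 \<longleftrightarrow>
     (\<exists>kh>0. (\<forall>\<kappa>. 0 < \<kappa> \<and> \<kappa> < kh \<longrightarrow> rho B C \<Delta> J2 J4 \<kappa> < 0) \<and>
        (\<exists>k1 k2. kh < k1 \<and> k1 < k2 \<and> rho B C \<Delta> J2 J4 k1 > 0 \<and> rho B C \<Delta> J2 J4 k2 < 0))"

definition detvals :: "int mat \<Rightarrow> int mat \<Rightarrow> real mat set \<Rightarrow> (real mat \<times> real mat) set \<Rightarrow> real \<Rightarrow> real set" where
  "detvals B C Ds Js \<kappa> = {det (- sysmat B C \<Delta> J2 J4 \<kappa>) | \<Delta> J2 J4. \<Delta> \<in> Ds \<and> (J2, J4) \<in> Js}"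

definition Psi_minus :: "int mat \<Rightarrow> int mat \<Rightarrow> real mat set \<Rightarrow> (real mat \<times> real mat) set \<Rightarrow> real \<Rightarrow> real" where
  "Psi_minus B C Ds Js \<kappa> = Inf (detvals B C Ds Js \<kappa>)"

definition Psi_plus :: "int mat \<Rightarrow> int mat \<Rightarrow> real mat set \<Rightarrow> (real mat \<times> real mat) set \<Rightarrow> real \<Rightarrow> real" where
  "Psi_plus B C Ds Js \<kappa> = Sup (detvals B C Ds Js \<kappa>)"

end

theory Submission
  imports Defs
begin

(*
  For M = B Delta C + kappa^2 J2 + kappa^4 J4, det(-M) is the characteristic polynomial of M
  at 0. Hence det(-M) < 0 forces a positive real eigenvalue (rho > 0), and rho < 0 forces
  det(-M) > 0. Conversely det(-M) > 0 implies rho < 0 both for small and for large kappa.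
  For small kappa, M is a perturbation of B Delta C, whose spectrum lies in the open left
  half plane apart from a simple zero (A1). An eigenvalue in the closed right half plane
  would have to lie near 0; together with its conjugate, or with the second real root forced
  by the signs of the characteristic polynomial at 0 and at a small t > 0, it would make
  that polynomial too small at t. For large kappa, (A2) drives the diagonal of M to -infinity
  uniformly and Gershgorin discs give rho < 0. So a determinant that is positive near 0 and
  negative somewhere yields microphase separation, and (i)-(iii) follow from
  Psi^- <= det(-M) <= Psi^+; for Psi^+ one uses that every vertex determinant is a polynomial
  in kappa and therefore has a sign just to the right of 0.

  For (iv): each of Delta_j, a_i, b_i enters M through a rank-one update, so det(-M) is affine
  in each of them separately, and its extrema over the box are attained at vertices.
*)

section \<open>Eigenvalues and the characteristic polynomial\<close>

abbreviation complex_char_poly :: "real mat \<Rightarrow> complex poly" where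
  "complex_char_poly X \<equiv> char_poly (map_mat complex_of_real X)"

lemma complex_char_poly_eq:
  assumes "X \<in> carrier_mat n n"
  shows "complex_char_poly X = map_poly complex_of_real (char_poly X)"
  using of_real_hom.char_poly_hom[OF assms] .

lemma poly_complex_char_poly_of_real:
  assumes "X \<in> carrier_mat n n"
  shows "poly (complex_char_poly X) (of_real x) = of_real (poly (char_poly X) x)"
  unfolding complex_char_poly_eq[OF assms] by (rule of_real_hom.poly_map_poly)

lemma ceig_iff_root:
  assumes "X \<in> carrier_mat n n"
  shows "ceig X z \<longleftrightarrow> poly (complex_char_poly X) z = 0"
  unfolding ceig_def by (rule eigenvalue_root_char_poly[of _ n]) (use assms in simp)

lemma poly_char_poly_0:
  fixes X :: "'a :: field mat"
  assumes "X \<in> carrier_mat n n"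
  shows "poly (char_poly X) 0 = det (- X)"
proof -
  have "char_matrix X 0 = X"
    unfolding char_matrix_def using assms by (intro eq_matI) auto
  then show ?thesis
    using char_poly_matrix[OF assms, of 0] by simp
qed

lemma order_prod_linear_factors:
  fixes r :: "'b \<Rightarrow> 'a :: idom"
  assumes "finite I"
  shows "order z (\<Prod>i\<in>I. [:- r i, 1:]) = card {i\<in>I. r i = z}"
  using assms
proof (induction I rule: finite_induct)
  case (insert x I)
  have nz: "[:- r x, 1:] * (\<Prod>i\<in>I. [:- r i, 1:]) \<noteq> 0"
    using insert.hyps(1) by (subst mult_eq_0_iff) (simp add: prod_zero_iff)
  have "order z (\<Prod>i\<in>insert x I. [:- r i, 1:])
      = order z [:- r x, 1:] + order z (\<Prod>i\<in>I. [:- r i, 1:])"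
    unfolding prod.insert[OF insert.hyps] using nz by (rule order_mult)
  also have "\<dots> = (if r x = z then 1 else 0) + card {i\<in>I. r i = z}"
    using insert.IH by (simp add: order_linear')
  also have "\<dots> = card {i\<in>insert x I. r i = z}"
  proof (cases "r x = z")
    case True
    then have "{i\<in>insert x I. r i = z} = insert x {i\<in>I. r i = z}" by auto
    then show ?thesis using True insert.hyps by simp
  next
    case False
    then have "{i\<in>insert x I. r i = z} = {i\<in>I. r i = z}" by auto
    then show ?thesis using False by simp
  qed
  finally show ?case .
qed simp

lemma poly_prod_linear_factors:
  fixes r :: "'b \<Rightarrow> 'a :: comm_ring_1"
  shows "poly (\<Prod>i\<in>I. [:- r i, 1:]) z = (\<Prod>i\<in>I. z - r i)"
  by (simp add: poly_prod)

lemma root_prod_linear_factors_iff: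
  fixes r :: "'b \<Rightarrow> 'a :: idom"
  assumes "finite I"
  shows "poly (\<Prod>i\<in>I. [:- r i, 1:]) z = 0 \<longleftrightarrow> (\<exists>i\<in>I. r i = z)"
  using assms by (auto simp: poly_prod_linear_factors prod_zero_iff)

lemma complex_char_poly_linear_factors:
  assumes "X \<in> carrier_mat n n"
  obtains r where "complex_char_poly X = (\<Prod>i<n. [:- r i, 1:])"
proof -
  obtain as where as: "complex_char_poly X = (\<Prod>a\<leftarrow>as. [:- a, 1:])" "length as = n"
    using char_poly_factorized[of "map_mat complex_of_real X" n] assms by auto
  have "complex_char_poly X = (\<Prod>i<n. [:- as ! i, 1:])"
    unfolding as(1) prod.list_conv_set_nth by (simp add: atLeast0LessThan as(2))
  then show ?thesis by (rule that)
qed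

lemma finite_ceig:
  assumes "X \<in> carrier_mat n n"
  shows "finite {z. ceig X z}"
proof -
  have "complex_char_poly X \<noteq> 0"
    using degree_monic_char_poly[of "map_mat complex_of_real X" n] assms by auto
  then show ?thesis
    unfolding ceig_iff_root[OF assms] by (rule poly_roots_finite)
qed

lemma ceig_exists:
  assumes X: "X \<in> carrier_mat n n" and n: "n \<ge> 1"
  shows "\<exists>z. ceig X z"
proof -
  obtain r where r: "complex_char_poly X = (\<Prod>i<n. [:- r i, 1:])"
    using complex_char_poly_linear_factors[OF X] .
  have "ceig X (r 0)"
    unfolding ceig_iff_root[OF X] r root_prod_linear_factors_iff[OF finite_lessThan] using n by auto
  then show ?thesis ..
qed

lemma spectral_abscissa_less_iff:
  assumes "X \<in> carrier_mat n n" and "n \<ge> 1"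
  shows "spectral_abscissa X < c \<longleftrightarrow> (\<forall>z. ceig X z \<longrightarrow> Re z < c)"
proof -
  have "{Re z |z. ceig X z} = Re ` {z. ceig X z}" by auto
  then show ?thesis
    unfolding spectral_abscissa_def
    using finite_ceig[OF assms(1)] ceig_exists[OF assms] by (auto simp: Max_less_iff)
qed

lemma less_spectral_abscissa_iff:
  assumes "X \<in> carrier_mat n n" and "n \<ge> 1"
  shows "c < spectral_abscissa X \<longleftrightarrow> (\<exists>z. ceig X z \<and> c < Re z)"
proof -
  have "{Re z |z. ceig X z} = Re ` {z. ceig X z}" by auto
  then show ?thesis
    unfolding spectral_abscissa_def
    using finite_ceig[OF assms(1)] ceig_exists[OF assms] by (auto simp: Max_gr_iff)
qed

lemma poly_pos_if_no_root_right:
  fixes p :: "real poly"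
  assumes lc: "lead_coeff p > 0" and no_root: "\<forall>x\<ge>a. poly p x \<noteq> 0"
  shows "poly p a > 0"
proof (rule ccontr)
  assume "\<not> poly p a > 0"
  with no_root have neg: "poly p a < 0" by force
  obtain b where b: "\<forall>x\<ge>b. poly p x \<ge> lead_coeff p"
    using poly_pinfty_gt_lc[OF lc] by blast
  have "poly p (max b (a + 1)) > 0"
    using b lc by (meson max.cobounded1 less_le_trans)
  then obtain x where "a < x" "poly p x = 0"
    using poly_IVT_pos[OF _ neg] by (metis less_add_one max.strict_coboundedI2)
  with no_root show False by auto
qed

lemma lead_coeff_char_poly:
  assumes "X \<in> carrier_mat n n"
  shows "lead_coeff (char_poly X) = 1"
  using degree_monic_char_poly[OF assms] by simp

lemma det_uminus_pos_if_no_nonneg_real_eigenvalue: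
  assumes X: "X \<in> carrier_mat n n" and no_eig: "\<forall>x\<ge>0. \<not> ceig X (of_real x)"
  shows "det (- X) > 0"
proof -
  have "\<forall>x\<ge>0. poly (char_poly X) x \<noteq> 0"
    using no_eig unfolding ceig_iff_root[OF X] poly_complex_char_poly_of_real[OF X] by auto
  then have "poly (char_poly X) 0 > 0"
    using poly_pos_if_no_root_right lead_coeff_char_poly[OF X] by simp
  then show ?thesis
    unfolding poly_char_poly_0[OF X] .
qed

lemma spectral_abscissa_pos_if_det_uminus_neg:
  assumes X: "X \<in> carrier_mat n n" and n: "n \<ge> 1" and neg: "det (- X) < 0"
  shows "spectral_abscissa X > 0"
proof -
  obtain x where x: "x \<ge> 0" "ceig X (of_real x)"
    using det_uminus_pos_if_no_nonneg_real_eigenvalue[OF X] neg by force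
  have "x \<noteq> 0"
  proof
    assume "x = 0"
    with x(2) have "poly (char_poly X) 0 = 0"
      unfolding ceig_iff_root[OF X] using poly_complex_char_poly_of_real[OF X, of 0] by simp
    with neg show False
      unfolding poly_char_poly_0[OF X] by simp
  qed
  with x show ?thesis
    unfolding less_spectral_abscissa_iff[OF X n] by force
qed

lemma det_uminus_pos_if_spectral_abscissa_neg:
  assumes X: "X \<in> carrier_mat n n" and n: "n \<ge> 1" and neg: "spectral_abscissa X < 0"
  shows "det (- X) > 0"
  using neg unfolding spectral_abscissa_less_iff[OF X n]
  by (intro det_uminus_pos_if_no_nonneg_real_eigenvalue[OF X]) force

section \<open>Gershgorin discs and continuity of the characteristic polynomial\<close>

lemma gershgorin:
  fixes Y :: "complex mat"
  assumes Y: "Y \<in> carrier_mat n n" and ev: "eigenvalue Y z"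
  shows "\<exists>i<n. cmod (z - Y $$ (i, i)) \<le> (\<Sum>j\<in>{0..<n} - {i}. cmod (Y $$ (i, j)))"
proof -
  obtain v where v: "v \<in> carrier_vec n" "v \<noteq> 0\<^sub>v n" "Y *\<^sub>v v = z \<cdot>\<^sub>v v"
    using ev Y unfolding eigenvalue_def eigenvector_def by auto
  have "n \<noteq> 0"
  proof
    assume "n = 0"
    then have "v = 0\<^sub>v n" using v(1) by (intro eq_vecI) auto
    with v(2) show False ..
  qed
  define M where "M = Max ((\<lambda>j. cmod (v $ j)) ` {0..<n})"
  have "M \<in> (\<lambda>j. cmod (v $ j)) ` {0..<n}"
    unfolding M_def using \<open>n \<noteq> 0\<close> by (intro Max_in) auto
  then obtain i where i: "i < n" "cmod (v $ i) = M" by auto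
  have max: "cmod (v $ j) \<le> cmod (v $ i)" if "j < n" for j
    unfolding i(2) M_def using that by (intro Max_ge) auto
  have vi: "cmod (v $ i) > 0"
  proof (rule ccontr)
    assume "\<not> cmod (v $ i) > 0"
    then have "v $ j = 0" if "j < n" for j
      using max[OF that] by (metis norm_le_zero_iff order_trans not_less)
    then have "v = 0\<^sub>v n" using v(1) by (intro eq_vecI) auto
    with v(2) show False ..
  qed
  have "z * v $ i = (\<Sum>j\<in>{0..<n}. Y $$ (i, j) * v $ j)"
    using arg_cong[OF v(3), of "\<lambda>u. u $ i"] Y v(1) i by (simp add: scalar_prod_def)
  also have "\<dots> = Y $$ (i, i) * v $ i + (\<Sum>j\<in>{0..<n} - {i}. Y $$ (i, j) * v $ j)"
    using i by (subst sum.remove[of _ i]) auto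
  finally have "(z - Y $$ (i, i)) * v $ i = (\<Sum>j\<in>{0..<n} - {i}. Y $$ (i, j) * v $ j)"
    by (simp add: algebra_simps)
  then have "cmod (z - Y $$ (i, i)) * cmod (v $ i) = cmod (\<Sum>j\<in>{0..<n} - {i}. Y $$ (i, j) * v $ j)"
    by (metis norm_mult)
  also have "\<dots> \<le> (\<Sum>j\<in>{0..<n} - {i}. cmod (Y $$ (i, j)) * cmod (v $ j))"
    by (rule order.trans[OF norm_sum]) (simp add: norm_mult)
  also have "\<dots> \<le> (\<Sum>j\<in>{0..<n} - {i}. cmod (Y $$ (i, j))) * cmod (v $ i)"
    unfolding sum_distrib_right by (intro sum_mono mult_left_mono max) auto
  finally show ?thesis
    using vi i(1) by (intro exI[of _ i]) simp
qed

lemma ceig_norm_le: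
  assumes X: "X \<in> carrier_mat n n" and K: "\<forall>i<n. \<forall>j<n. \<bar>X $$ (i, j)\<bar> \<le> K"
    and z: "ceig X z"
  shows "cmod z \<le> n * K"
proof -
  let ?Xc = "map_mat complex_of_real X"
  obtain i where i: "i < n" "cmod (z - ?Xc $$ (i, i)) \<le> (\<Sum>j\<in>{0..<n} - {i}. cmod (?Xc $$ (i, j)))"
    using gershgorin[of ?Xc n z] X z unfolding ceig_def by auto
  have "cmod z \<le> cmod (?Xc $$ (i, i)) + cmod (z - ?Xc $$ (i, i))"
    by (rule norm_triangle_sub)
  also have "\<dots> \<le> (\<Sum>j\<in>{0..<n}. cmod (?Xc $$ (i, j)))"
    using i by (simp add: sum.remove[of "{0..<n}" i])
  also have "\<dots> \<le> (\<Sum>j\<in>{0..<n}. K)"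
    using i(1) X K by (intro sum_mono) auto
  finally show ?thesis by simp
qed

lemma spectral_abscissa_neg_if_diagonally_dominant:
  assumes X: "X \<in> carrier_mat n n" and n: "n \<ge> 1"
    and dom: "\<forall>i<n. X $$ (i, i) + (\<Sum>j\<in>{0..<n} - {i}. \<bar>X $$ (i, j)\<bar>) < 0"
  shows "spectral_abscissa X < 0"
proof -
  have "Re z < 0" if z: "ceig X z" for z
  proof -
    let ?Xc = "map_mat complex_of_real X"
    obtain i where i: "i < n" "cmod (z - ?Xc $$ (i, i)) \<le> (\<Sum>j\<in>{0..<n} - {i}. cmod (?Xc $$ (i, j)))"
      using gershgorin[of ?Xc n z] X z unfolding ceig_def by auto
    have "(\<Sum>j\<in>{0..<n} - {i}. cmod (?Xc $$ (i, j))) = (\<Sum>j\<in>{0..<n} - {i}. \<bar>X $$ (i, j)\<bar>)"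
      using X i(1) by (intro sum.cong) auto
    moreover have "Re z \<le> X $$ (i, i) + cmod (z - ?Xc $$ (i, i))"
      using complex_Re_le_cmod[of "z - ?Xc $$ (i, i)"] X i(1) by simp
    ultimately show ?thesis
      using dom i by fastforce
  qed
  then show ?thesis
    using spectral_abscissa_less_iff[OF X n] by blast
qed

lemma sum_abs_row_le_sum_abs_entries:
  fixes A :: "real mat"
  assumes "i < n"
  shows "(\<Sum>j<n. \<bar>A $$ (i, j)\<bar>) \<le> (\<Sum>i<n. \<Sum>j<n. \<bar>A $$ (i, j)\<bar>)"
  using assms by (intro member_le_sum[of i _ "\<lambda>i. \<Sum>j<n. \<bar>A $$ (i, j)\<bar>"]) (auto intro: sum_nonneg)

lemma abs_entry_le_sum_abs_entries:
  fixes A :: "real mat"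
  assumes "i < n" "j < n"
  shows "\<bar>A $$ (i, j)\<bar> \<le> (\<Sum>i<n. \<Sum>j<n. \<bar>A $$ (i, j)\<bar>)"
proof -
  have "\<bar>A $$ (i, j)\<bar> \<le> (\<Sum>j<n. \<bar>A $$ (i, j)\<bar>)"
    using assms by (intro member_le_sum) auto
  also have "\<dots> \<le> (\<Sum>i<n. \<Sum>j<n. \<bar>A $$ (i, j)\<bar>)"
    by (rule sum_abs_row_le_sum_abs_entries[OF assms(1)])
  finally show ?thesis .
qed

lemma norm_prod_diff_le:
  fixes a b :: "'i \<Rightarrow> 'a :: real_normed_field" and L e :: real
  assumes "finite I" and "L \<ge> 1"
    and "\<forall>i\<in>I. norm (a i) \<le> L \<and> norm (b i) \<le> L \<and> norm (a i - b i) \<le> e"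
  shows "norm (prod a I - prod b I) \<le> card I * L ^ card I * e"
    and "norm (prod b I) \<le> L ^ card I"
proof -
  have "norm (prod a I - prod b I) \<le> card I * L ^ card I * e \<and> norm (prod b I) \<le> L ^ card I"
    using assms
  proof (induction I rule: finite_induct)
    case (insert x F)
    let ?A = "prod a F" and ?B = "prod b F"
    have IH: "norm (?A - ?B) \<le> card F * L ^ card F * e" "norm ?B \<le> L ^ card F"
      using insert by auto
    have x: "norm (a x) \<le> L" "norm (b x) \<le> L" "norm (a x - b x) \<le> e"
      using insert.prems by auto
    have e: "e \<ge> 0" using x(3) norm_ge_zero order.trans by blast
    have "prod a (insert x F) - prod b (insert x F) = a x * (?A - ?B) + (a x - b x) * ?B"
      using insert.hyps by (simp add: algebra_simps)
    then have "norm (prod a (insert x F) - prod b (insert x F))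
        \<le> norm (a x) * norm (?A - ?B) + norm (a x - b x) * norm ?B"
      by (metis norm_mult norm_triangle_ineq)
    also have "\<dots> \<le> L * (card F * L ^ card F * e) + e * L ^ card F"
      by (intro add_mono mult_mono IH x) (use e insert.prems in auto)
    also have "\<dots> \<le> L * (card F * L ^ card F * e) + e * L ^ Suc (card F)"
      using e insert.prems by (intro add_left_mono mult_left_mono power_increasing) auto
    also have "\<dots> = card (insert x F) * L ^ card (insert x F) * e"
      using insert.hyps by (simp add: algebra_simps)
    finally have "norm (prod a (insert x F) - prod b (insert x F)) \<le> card (insert x F) * L ^ card (insert x F) * e" .
    moreover have "norm (prod b (insert x F)) \<le> L ^ card (insert x F)"
    proof -
      have "norm (prod b (insert x F)) = norm (b x) * norm ?B"
        using insert.hyps by (simp add: norm_mult)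
      also have "\<dots> \<le> L * L ^ card F"
        by (intro mult_mono x(2) IH(2)) (use insert.prems in auto)
      finally show ?thesis
        using insert.hyps by simp
    qed
    ultimately show ?case ..
  qed simp
  then show "norm (prod a I - prod b I) \<le> card I * L ^ card I * e" and "norm (prod b I) \<le> L ^ card I"
    by auto
qed

lemma norm_det_diff_le:
  fixes P Q :: "'a :: real_normed_field mat" and L e :: real
  assumes P: "P \<in> carrier_mat n n" and Q: "Q \<in> carrier_mat n n" and L: "L \<ge> 1"
    and entries: "\<forall>i<n. \<forall>j<n. norm (P $$ (i, j)) \<le> L \<and> norm (Q $$ (i, j)) \<le> L
      \<and> norm (P $$ (i, j) - Q $$ (i, j)) \<le> e"
  shows "norm (det P - det Q) \<le> fact n * (n * L ^ n * e)"
proof -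
  let ?S = "{p. p permutes {0..<n}}"
  let ?d = "\<lambda>p. (\<Prod>i=0..<n. P $$ (i, p i)) - (\<Prod>i=0..<n. Q $$ (i, p i))"
  have "det P - det Q = (\<Sum>p\<in>?S. signof p * ?d p)"
    unfolding det_def'[OF P] det_def'[OF Q] sum_subtractf[symmetric] right_diff_distrib ..
  then have "norm (det P - det Q) \<le> (\<Sum>p\<in>?S. norm (signof p * ?d p))"
    by (simp add: norm_sum)
  also have "\<dots> \<le> (\<Sum>p\<in>?S. n * L ^ n * e)"
  proof (rule sum_mono)
    fix p assume "p \<in> ?S"
    then have p: "p permutes {0..<n}" by simp
    have "\<forall>i\<in>{0..<n}. norm (P $$ (i, p i)) \<le> L \<and> norm (Q $$ (i, p i)) \<le> L
        \<and> norm (P $$ (i, p i) - Q $$ (i, p i)) \<le> e"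
      using entries permutes_in_image[OF p] by auto
    then have "norm (?d p) \<le> n * L ^ n * e"
      using norm_prod_diff_le(1)[OF finite_atLeastLessThan L, where a = "\<lambda>i. P $$ (i, p i)" and b = "\<lambda>i. Q $$ (i, p i)"]
      by force
    moreover have "norm (signof p :: 'a) = 1"
      by (simp add: sign_def)
    ultimately show "norm (signof p * ?d p) \<le> n * L ^ n * e"
      by (simp add: norm_mult)
  qed
  also have "\<dots> = fact n * (n * L ^ n * e)"
    using card_permutations[of "{0..<n}" n] by simp
  finally show ?thesis .
qed

lemma norm_char_poly_diff_le:
  fixes X Y :: "real mat"
  assumes X: "X \<in> carrier_mat n n" and Y: "Y \<in> carrier_mat n n" and "K \<ge> 0" "Z \<ge> 0"
    and entries: "\<forall>i<n. \<forall>j<n. \<bar>X $$ (i, j)\<bar> \<le> K \<and> \<bar>Y $$ (i, j)\<bar> \<le> K \<and> \<bar>Y $$ (i, j) - X $$ (i, j)\<bar> \<le> e"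
    and z: "cmod z \<le> Z"
  shows "cmod (poly (complex_char_poly Y) z - poly (complex_char_poly X) z) \<le> fact n * (n * (Z + K + 1) ^ n * e)"
proof -
  let ?M = "\<lambda>A. - char_matrix (map_mat complex_of_real A) z"
  have poly_eq: "poly (complex_char_poly A) z = det (?M A)" if "A \<in> carrier_mat n n" for A
    by (rule char_poly_matrix) (use that in simp)
  have entry: "?M A $$ (i, j) = (if i = j then z else 0) - complex_of_real (A $$ (i, j))"
    if "A \<in> carrier_mat n n" "i < n" "j < n" for A i j
    using that by (simp add: char_matrix_def)
  have bound: "cmod ((if i = j then z else 0) - complex_of_real a) \<le> Z + K + 1" if "\<bar>a\<bar> \<le> K" for i j :: nat and a
    using norm_triangle_ineq4[of "if i = j then z else 0" "complex_of_real a"] that z \<open>Z \<ge> 0\<close>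
    by (auto split: if_splits)
  have "cmod (det (?M Y) - det (?M X)) \<le> fact n * (n * (Z + K + 1) ^ n * e)"
  proof (rule norm_det_diff_le)
    show "\<forall>i<n. \<forall>j<n. cmod (?M Y $$ (i, j)) \<le> Z + K + 1 \<and> cmod (?M X $$ (i, j)) \<le> Z + K + 1
        \<and> cmod (?M Y $$ (i, j) - ?M X $$ (i, j)) \<le> e"
    proof (intro allI impI conjI)
      fix i j assume ij: "i < n" "j < n"
      show "cmod (?M Y $$ (i, j)) \<le> Z + K + 1" "cmod (?M X $$ (i, j)) \<le> Z + K + 1"
        using entries ij by (simp_all add: entry[OF Y ij] entry[OF X ij] bound)
      have "?M Y $$ (i, j) - ?M X $$ (i, j) = complex_of_real (X $$ (i, j) - Y $$ (i, j))"
        by (simp add: entry[OF Y ij] entry[OF X ij])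
      then show "cmod (?M Y $$ (i, j) - ?M X $$ (i, j)) \<le> e"
        using entries ij by (simp only: norm_of_real) (simp add: abs_minus_commute)
    qed
  qed (use X Y \<open>K \<ge> 0\<close> \<open>Z \<ge> 0\<close> in \<open>auto simp: char_matrix_def\<close>)
  then show ?thesis
    unfolding poly_eq[OF X] poly_eq[OF Y] .
qed

section \<open>Stability of a simple zero eigenvalue\<close>

lemma lead_coeff_eq_1_if_linear_factors:
  fixes p :: "real poly"
  assumes "map_poly complex_of_real p = (\<Prod>i\<in>I. [:- r i, 1:])"
  shows "lead_coeff p = 1"
proof -
  have "complex_of_real (lead_coeff p) = lead_coeff (\<Prod>i\<in>I. [:- r i, 1:])"
    using arg_cong[OF assms, of lead_coeff] by simp
  also have "\<dots> = 1"
    by (simp add: lead_coeff_prod)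
  finally show ?thesis by simp
qed

lemma poly_pos_if_roots_left:
  fixes p :: "real poly" and n :: nat
  assumes p: "map_poly complex_of_real p = (\<Prod>i<n. [:- r i, 1:])"
    and left: "\<forall>i<n. Re (r i) < a"
  shows "poly p a > 0"
proof (rule poly_pos_if_no_root_right)
  show "lead_coeff p > 0"
    using lead_coeff_eq_1_if_linear_factors[OF p] by simp
  show "\<forall>x\<ge>a. poly p x \<noteq> 0"
  proof (intro allI impI notI)
    fix x assume "a \<le> x" "poly p x = 0"
    then have "poly (map_poly complex_of_real p) (of_real x) = 0"
      by simp
    then obtain i where "i < n" "r i = of_real x"
      using root_prod_linear_factors_iff[of "{..<n}" r] unfolding p by auto
    with left \<open>a \<le> x\<close> show False by force
  qed
qed

lemma norm_prod_ge_near_simple_zero: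
  fixes r :: "nat \<Rightarrow> complex"
  assumes i0: "i0 < n" "r i0 = 0" and far: "\<forall>i<n. i \<noteq> i0 \<longrightarrow> \<gamma> \<le> cmod (r i)"
    and z: "cmod z \<le> \<gamma> / 2"
  shows "cmod z * (\<gamma> / 2) ^ (n - 1) \<le> cmod (\<Prod>i<n. z - r i)"
proof -
  have "(\<Prod>i<n. z - r i) = z * (\<Prod>i\<in>{..<n} - {i0}. z - r i)"
    using i0 by (subst prod.remove[of _ i0]) auto
  moreover have "(\<Prod>i\<in>{..<n} - {i0}. \<gamma> / 2) \<le> (\<Prod>i\<in>{..<n} - {i0}. cmod (z - r i))"
  proof (rule prod_mono)
    fix i assume "i \<in> {..<n} - {i0}"
    then have "\<gamma> \<le> cmod (r i)" using far by auto
    moreover have "cmod (r i) \<le> cmod (z - r i) + cmod z"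
      by (metis norm_triangle_sub norm_minus_commute add.commute)
    ultimately show "0 \<le> \<gamma> / 2 \<and> \<gamma> / 2 \<le> cmod (z - r i)"
      using z norm_ge_zero[of z] by linarith
  qed
  moreover have "(\<Prod>i\<in>{..<n} - {i0}. \<gamma> / 2) = (\<gamma> / 2) ^ (n - 1)"
    using i0 by simp
  ultimately show ?thesis
    by (simp add: norm_mult prod_norm mult_left_mono)
qed

lemma norm_prod_le_two_small_factors:
  fixes w :: "nat \<Rightarrow> complex" and t R :: real
  assumes ab: "a < n" "b < n" "a \<noteq> b" "cmod (w a) \<le> t" "cmod (w b) \<le> t"
    and wR: "\<forall>i<n. cmod (w i) \<le> R" and t: "t \<ge> 0"
  shows "cmod (\<Prod>i<n. of_real t - w i) \<le> (2 * t) ^ 2 * (t + R) ^ (n - 2)"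
proof -
  let ?f = "\<lambda>i. complex_of_real t - w i"
  have f: "cmod (?f i) \<le> t + cmod (w i)" for i
    using norm_triangle_ineq4[of "of_real t" "w i"] t by simp
  have split: "(\<Prod>i<n. ?f i) = ?f a * (?f b * (\<Prod>i\<in>{..<n} - {a} - {b}. ?f i))"
    using ab by (simp add: prod.remove[of _ a] prod.remove[of "{..<n} - {a}" b])
  have "(\<Prod>i\<in>{..<n} - {a} - {b}. cmod (?f i)) \<le> (\<Prod>i\<in>{..<n} - {a} - {b}. t + R)"
  proof (rule prod_mono)
    fix i assume "i \<in> {..<n} - {a} - {b}"
    then have "cmod (w i) \<le> R" using wR by auto
    then show "0 \<le> cmod (?f i) \<and> cmod (?f i) \<le> t + R"
      using f[of i] by simp
  qed
  moreover have "card ({..<n} - {a} - {b}) = n - 2"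
    using ab by (simp add: card_Diff_singleton_if)
  ultimately have rest: "cmod (\<Prod>i\<in>{..<n} - {a} - {b}. ?f i) \<le> (t + R) ^ (n - 2)"
    by (simp add: prod_norm)
  have "cmod (?f a) \<le> 2 * t" "cmod (?f b) \<le> 2 * t"
    using f[of a] f[of b] ab by auto
  then have "cmod (\<Prod>i<n. ?f i) \<le> (2 * t) * ((2 * t) * (t + R) ^ (n - 2))"
    unfolding split norm_mult
    by (intro mult_mono rest) (use t in auto)
  then show ?thesis
    by (simp add: power2_eq_square)
qed

lemma real_poly_second_root_between:
  fixes q :: "real poly" and w :: "nat \<Rightarrow> complex"
  assumes q: "map_poly complex_of_real q = (\<Prod>i<n. [:- w i, 1:])"
    and a: "a < n" "w a = of_real x" and x: "0 < x" "x < t"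
    and q0: "poly q 0 > 0" and qt: "poly q t > 0"
  shows "\<exists>b<n. b \<noteq> a \<and> (\<exists>y. 0 < y \<and> y < t \<and> w b = of_real y)"
proof -
  have "poly (map_poly complex_of_real q) (of_real x) = 0"
    unfolding q using root_prod_linear_factors_iff[of "{..<n}" w] a by auto
  then have "poly q x = 0"
    by simp
  then obtain g where g: "q = [:- x, 1:] * g"
    by (metis poly_eq_0_iff_dvd dvdE)
  interpret of_real_poly: map_poly_idom_hom complex_of_real ..
  have "[:- w a, 1:] * map_poly complex_of_real g = map_poly complex_of_real q"
    unfolding g a(2) of_real_poly.hom_mult by simp
  also have "\<dots> = [:- w a, 1:] * (\<Prod>i\<in>{..<n} - {a}. [:- w i, 1:])"
    unfolding q using a(1) by (intro prod.remove) auto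
  finally have g_factors: "map_poly complex_of_real g = (\<Prod>i\<in>{..<n} - {a}. [:- w i, 1:])"
    by (rule mult_left_cancel[THEN iffD1, rotated]) simp
  have "poly q 0 = - x * poly g 0" "poly q t = (t - x) * poly g t"
    unfolding g by (simp_all add: algebra_simps)
  then have "poly g 0 < 0" "poly g t > 0"
    using q0 qt x by (auto simp: zero_less_mult_iff mult_less_0_iff)
  then obtain y where y: "0 < y" "y < t" "poly g y = 0"
    using poly_IVT_pos[of 0 t g] x by auto
  then have "poly (map_poly complex_of_real g) (of_real y) = 0"
    by simp
  then obtain b where "b \<in> {..<n} - {a}" "w b = of_real y"
    using root_prod_linear_factors_iff[of "{..<n} - {a}" w] unfolding g_factors by blast
  with y show ?thesis
    by auto
qed

lemma real_poly_two_small_roots: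
  fixes q :: "real poly" and w :: "nat \<Rightarrow> complex"
  assumes q: "map_poly complex_of_real q = (\<Prod>i<n. [:- w i, 1:])"
    and z: "poly (map_poly complex_of_real q) z = 0" "0 \<le> Re z" "cmod z < t"
    and q0: "poly q 0 > 0" and qt: "poly q t > 0"
  shows "\<exists>a<n. \<exists>b<n. a \<noteq> b \<and> cmod (w a) < t \<and> cmod (w b) < t"
proof -
  let ?qc = "map_poly complex_of_real q"
  have root_iff: "poly ?qc \<zeta> = 0 \<longleftrightarrow> (\<exists>i<n. w i = \<zeta>)" for \<zeta>
    using root_prod_linear_factors_iff[of "{..<n}" w] unfolding q by auto
  show ?thesis
  proof (cases "Im z = 0")
    case False
    have "cnj (poly ?qc z) = poly ?qc (cnj z)"
      by (rule poly_cnj_real) (simp add: of_real_hom.coeff_map_poly_hom)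
    then have "poly ?qc (cnj z) = 0"
      using z(1) by simp
    moreover have "cnj z \<noteq> z"
      using False by (simp add: complex_eq_iff)
    ultimately show ?thesis
      using z(1,3) root_iff by (metis complex_mod_cnj)
  next
    case True
    then obtain x where zx: "z = of_real x"
      by (metis complex_is_Real_iff Reals_cases)
    then have "poly q x = 0"
      using z(1) by simp
    then have x: "0 < x" "x < t"
      using q0 z(2,3) zx by (auto simp: less_le)
    obtain a where a: "a < n" "w a = of_real x"
      using z(1) root_iff zx by blast
    then obtain b y where "b < n" "b \<noteq> a" "0 < y" "y < t" "w b = of_real y"
      using real_poly_second_root_between[OF q a x q0 qt] by blast
    with a x show ?thesis
      by (intro exI[of _ a] exI[of _ b]) auto
  qed
qed

lemma poly_ge_near_simple_zero:
  fixes p :: "real poly" and r :: "nat \<Rightarrow> complex" and n :: nat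
  assumes p: "map_poly complex_of_real p = (\<Prod>i<n. [:- r i, 1:])"
    and i0: "i0 < n" "r i0 = 0" and left: "\<forall>i<n. i \<noteq> i0 \<longrightarrow> Re (r i) \<le> - \<gamma>"
    and t: "0 < t" "t \<le> \<gamma> / 2"
  shows "(\<gamma> / 2) ^ (n - 1) * t \<le> poly p t"
proof -
  have far: "\<forall>i<n. i \<noteq> i0 \<longrightarrow> \<gamma> \<le> cmod (r i)"
  proof (intro allI impI)
    fix i assume "i < n" "i \<noteq> i0"
    then have "Re (r i) \<le> - \<gamma>" using left by blast
    then show "\<gamma> \<le> cmod (r i)" using abs_Re_le_cmod[of "r i"] by linarith
  qed
  have "\<forall>i<n. Re (r i) < t"
  proof (intro allI impI)
    fix i assume "i < n"
    then show "Re (r i) < t"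
      using left i0 t by (cases "i = i0") force+
  qed
  then have "poly p t > 0"
    by (rule poly_pos_if_roots_left[OF p])
  moreover have "cmod (of_real t) * (\<gamma> / 2) ^ (n - 1) \<le> cmod (\<Prod>i<n. of_real t - r i)"
    using t by (intro norm_prod_ge_near_simple_zero[OF i0 far]) simp
  moreover have "(\<Prod>i<n. complex_of_real t - r i) = of_real (poly p t)"
    using arg_cong[OF p, of "\<lambda>f. poly f (of_real t)"] by (simp add: poly_prod_linear_factors)
  ultimately show ?thesis
    using t(1) by (simp add: mult.commute)
qed

lemma close_root_near_zero:
  fixes p q :: "real poly" and r :: "nat \<Rightarrow> complex" and n :: nat
  assumes p: "map_poly complex_of_real p = (\<Prod>i<n. [:- r i, 1:])"
    and i0: "r i0 = 0" and left: "\<forall>i<n. i \<noteq> i0 \<longrightarrow> Re (r i) \<le> - \<gamma>"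
    and t: "0 < t" "t \<le> \<gamma> / 2" and \<delta>: "\<delta> < t ^ n"
    and close: "cmod (poly (map_poly complex_of_real q) z - poly (map_poly complex_of_real p) z) \<le> \<delta>"
    and z: "poly (map_poly complex_of_real q) z = 0" "0 \<le> Re z"
  shows "cmod z < t"
proof -
  have "\<exists>i<n. cmod (z - r i) < t"
  proof (rule ccontr)
    assume "\<not> ?thesis"
    then have "\<forall>i<n. t \<le> cmod (z - r i)"
      by (metis not_less)
    then have "(\<Prod>i<n. t) \<le> (\<Prod>i<n. cmod (z - r i))"
      using t(1) by (intro prod_mono) auto
    also have "\<dots> = cmod (poly (map_poly complex_of_real q) z - poly (map_poly complex_of_real p) z)"
      unfolding z(1) p poly_prod_linear_factors by (simp add: prod_norm)
    finally show False
      using close \<delta> by simp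
  qed
  then obtain i where i: "i < n" "cmod (z - r i) < t" by blast
  have "i = i0"
  proof (rule ccontr)
    assume "i \<noteq> i0"
    then have "\<gamma> \<le> Re (z - r i)"
      using left i(1) z(2) by force
    also have "\<dots> \<le> cmod (z - r i)"
      by (rule complex_Re_le_cmod)
    finally show False
      using i(2) t by linarith
  qed
  then show ?thesis
    using i(2) i0 by simp
qed

lemma roots_left_half_plane_if_close:
  fixes p q :: "real poly" and r w :: "nat \<Rightarrow> complex" and n :: nat
  assumes p: "map_poly complex_of_real p = (\<Prod>i<n. [:- r i, 1:])"
    and i0: "i0 < n" "r i0 = 0" and left: "\<forall>i<n. i \<noteq> i0 \<longrightarrow> Re (r i) \<le> - \<gamma>"
    and t: "0 < t" "t \<le> \<gamma> / 2" "t \<le> 1" "16 * t * (1 + R) ^ (n - 2) \<le> (\<gamma> / 2) ^ (n - 1)"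
    and \<delta>: "\<delta> < t ^ n" "\<delta> < (\<gamma> / 2) ^ (n - 1) * t / 2"
    and q: "map_poly complex_of_real q = (\<Prod>i<n. [:- w i, 1:])"
    and R: "R \<ge> 0" and w_bounded: "\<forall>i<n. cmod (w i) \<le> R"
    and close: "\<forall>z. cmod z \<le> R + 1 \<longrightarrow>
      cmod (poly (map_poly complex_of_real q) z - poly (map_poly complex_of_real p) z) \<le> \<delta>"
    and q0: "poly q 0 > 0" and j: "j < n"
  shows "Re (w j) < 0"
proof (rule ccontr)
  let ?c = "(\<gamma> / 2) ^ (n - 1)"
  assume "\<not> Re (w j) < 0"
  then have Re_wj: "0 \<le> Re (w j)" by simp
  have root: "poly (map_poly complex_of_real q) (w j) = 0"
    unfolding q using root_prod_linear_factors_iff[of "{..<n}" w] j by auto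
  have small: "cmod (w j) < t"
    using close[rule_format, of "w j"] w_bounded[rule_format, OF j]
    by (intro close_root_near_zero[OF p i0(2) left t(1,2) \<delta>(1) _ root Re_wj]) simp
  have "\<bar>poly q t - poly p t\<bar> \<le> \<delta>"
    using close[rule_format, of "of_real t"] t R by (simp flip: of_real_diff)
  then have q_t: "?c * t / 2 < poly q t"
    using poly_ge_near_simple_zero[OF p i0 left t(1,2)] \<delta>(2) by linarith
  moreover have "?c * t > 0"
    using t by simp
  ultimately obtain a b where ab: "a < n" "b < n" "a \<noteq> b" "cmod (w a) < t" "cmod (w b) < t"
    using real_poly_two_small_roots[OF q root Re_wj small q0] by auto
  \<comment> \<open>Two roots of modulus below \<open>t\<close> make \<open>\<bar>q t\<bar> \<le> c t / 4\<close>, whereas \<open>q t > c t / 2\<close>.\<close>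
  have "complex_of_real (poly q t) = (\<Prod>i<n. of_real t - w i)"
    using arg_cong[OF q, of "\<lambda>f. poly f (of_real t)"] by (simp add: poly_prod_linear_factors)
  then have "\<bar>poly q t\<bar> \<le> (2 * t) ^ 2 * (t + R) ^ (n - 2)"
    using norm_prod_le_two_small_factors[OF ab(1-3) less_imp_le less_imp_le w_bounded, where t = t] ab(4,5) t(1)
    by (metis norm_of_real less_imp_le)
  also have "\<dots> \<le> (2 * t) ^ 2 * (1 + R) ^ (n - 2)"
    using t R by (intro mult_left_mono power_mono) auto
  also have "\<dots> = t / 4 * (16 * t * (1 + R) ^ (n - 2))"
    by (simp add: power2_eq_square)
  also have "\<dots> \<le> t / 4 * ?c"
    using t by (intro mult_left_mono) auto
  also have "\<dots> = ?c * t / 4"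
    by simp
  finally show False
    using q_t \<open>?c * t > 0\<close> abs_ge_self[of "poly q t"] by linarith
qed

lemma uniform_negative_bound:
  fixes f :: "'a \<Rightarrow> real"
  assumes "finite I" and "\<forall>i\<in>I. f i < 0"
  obtains \<sigma> where "0 < \<sigma>" "\<sigma> \<le> 1" "\<forall>i\<in>I. f i \<le> - \<sigma>"
proof
  let ?\<sigma> = "Min (insert 1 ((\<lambda>i. - f i) ` I))"
  show "0 < ?\<sigma>" "?\<sigma> \<le> 1"
    using assms by (auto simp: Min_gr_iff)
  show "\<forall>i\<in>I. f i \<le> - ?\<sigma>"
  proof
    fix i assume "i \<in> I"
    then have "?\<sigma> \<le> - f i"
      using assms(1) by (intro Min_le) auto
    then show "f i \<le> - ?\<sigma>" by linarith
  qed
qed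

lemma roots_left_half_plane_stable:
  fixes p :: "real poly" and r :: "nat \<Rightarrow> complex" and n :: nat and R :: real
  assumes p: "map_poly complex_of_real p = (\<Prod>i<n. [:- r i, 1:])"
    and i0: "i0 < n" "r i0 = 0" and neg: "\<forall>i<n. i \<noteq> i0 \<longrightarrow> Re (r i) < 0"
    and R: "R \<ge> 0"
  shows "\<exists>\<delta>>0. \<forall>q w. map_poly complex_of_real q = (\<Prod>i<n. [:- w i, 1:]) \<longrightarrow> (\<forall>i<n. cmod (w i) \<le> R)
    \<longrightarrow> (\<forall>z. cmod z \<le> R + 1 \<longrightarrow>
          cmod (poly (map_poly complex_of_real q) z - poly (map_poly complex_of_real p) z) \<le> \<delta>)
    \<longrightarrow> poly q 0 > 0 \<longrightarrow> (\<forall>i<n. Re (w i) < 0)"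
proof -
  obtain \<gamma> where \<gamma>: "0 < \<gamma>" "\<gamma> \<le> 1" and left': "\<forall>i\<in>{..<n} - {i0}. Re (r i) \<le> - \<gamma>"
    using uniform_negative_bound[of "{..<n} - {i0}" "\<lambda>i. Re (r i)"] neg by blast
  then have left: "\<forall>i<n. i \<noteq> i0 \<longrightarrow> Re (r i) \<le> - \<gamma>"
    by auto
  define c where "c = (\<gamma> / 2) ^ (n - 1)"
  define t where "t = min (\<gamma> / 2) (c / (16 * (1 + R) ^ (n - 2)))"
  define \<delta> where "\<delta> = min (t ^ n) (c * t / 2) / 2"
  have c: "c > 0"
    unfolding c_def using \<gamma> by simp
  have t: "0 < t" "t \<le> \<gamma> / 2" "16 * t * (1 + R) ^ (n - 2) \<le> c"
    unfolding t_def using \<gamma> c R by (auto simp: min_def field_simps)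
  then have "t \<le> 1"
    using \<gamma> by linarith
  have \<delta>: "0 < \<delta>" "\<delta> < t ^ n" "\<delta> < c * t / 2"
  proof -
    have "0 < t ^ n" "0 < c * t / 2"
      using t(1) c by simp_all
    then show "0 < \<delta>" "\<delta> < t ^ n" "\<delta> < c * t / 2"
      unfolding \<delta>_def by linarith+
  qed
  show ?thesis
    using roots_left_half_plane_if_close[OF p i0 left t(1,2) \<open>t \<le> 1\<close> t(3)[unfolded c_def] \<delta>(2,3)[unfolded c_def] _ R] \<delta>(1)
    by blast
qed

lemma complex_char_poly_close:
  fixes X0 :: "real mat"
  assumes X0: "X0 \<in> carrier_mat n n" and Z: "Z \<ge> 0" and \<delta>: "\<delta> > 0"
  shows "\<exists>\<eta>>0. \<forall>Y\<in>carrier_mat n n. (\<forall>i<n. \<forall>j<n. \<bar>Y $$ (i, j) - X0 $$ (i, j)\<bar> < \<eta>) \<longrightarrow>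
    (\<forall>z. cmod z \<le> Z \<longrightarrow> cmod (poly (complex_char_poly Y) z - poly (complex_char_poly X0) z) \<le> \<delta>)"
proof -
  define K where "K = (\<Sum>i<n. \<Sum>j<n. \<bar>X0 $$ (i, j)\<bar>) + 1"
  define C where "C = fact n * (n * (Z + K + 1) ^ n)"
  define \<eta> where "\<eta> = min 1 (\<delta> / (C + 1))"
  have K: "K \<ge> 1"
    unfolding K_def by (simp add: sum_nonneg)
  have C: "C \<ge> 0"
    unfolding C_def using K Z by simp
  have \<eta>: "0 < \<eta>" "\<eta> \<le> 1" "C * \<eta> \<le> \<delta>"
  proof -
    show "0 < \<eta>" "\<eta> \<le> 1"
      unfolding \<eta>_def using \<delta> C by auto
    have "C * \<eta> \<le> C * (\<delta> / (C + 1))"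
      unfolding \<eta>_def using C by (intro mult_left_mono) auto
    also have "\<dots> \<le> \<delta>"
      using C \<delta> by (simp add: field_simps)
    finally show "C * \<eta> \<le> \<delta>" .
  qed
  show ?thesis
  proof (intro exI[of _ \<eta>] conjI \<eta>(1) ballI impI allI)
    fix Y z
    assume Y: "Y \<in> carrier_mat n n" and close: "\<forall>i<n. \<forall>j<n. \<bar>Y $$ (i, j) - X0 $$ (i, j)\<bar> < \<eta>"
      and z: "cmod z \<le> Z"
    have entries: "\<forall>i<n. \<forall>j<n. \<bar>X0 $$ (i, j)\<bar> \<le> K \<and> \<bar>Y $$ (i, j)\<bar> \<le> K \<and> \<bar>Y $$ (i, j) - X0 $$ (i, j)\<bar> \<le> \<eta>"
    proof (intro allI impI)
      fix i j assume ij: "i < n" "j < n"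
      have "\<bar>X0 $$ (i, j)\<bar> \<le> K - 1"
        using abs_entry_le_sum_abs_entries[OF ij, of X0] unfolding K_def by simp
      then show "\<bar>X0 $$ (i, j)\<bar> \<le> K \<and> \<bar>Y $$ (i, j)\<bar> \<le> K \<and> \<bar>Y $$ (i, j) - X0 $$ (i, j)\<bar> \<le> \<eta>"
        using close ij \<eta>(2) by force
    qed
    have "cmod (poly (complex_char_poly Y) z - poly (complex_char_poly X0) z) \<le> C * \<eta>"
      using norm_char_poly_diff_le[OF X0 Y _ Z entries z] K unfolding C_def by (simp add: mult.assoc)
    with \<eta>(3) show "cmod (poly (complex_char_poly Y) z - poly (complex_char_poly X0) z) \<le> \<delta>"
      by linarith
  qed
qed

lemma ceig_norm_le_if_close:
  assumes X0: "X0 \<in> carrier_mat n n" and Y: "Y \<in> carrier_mat n n"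
    and close: "\<forall>i<n. \<forall>j<n. \<bar>Y $$ (i, j) - X0 $$ (i, j)\<bar> \<le> 1" and z: "ceig Y z"
  shows "cmod z \<le> n * ((\<Sum>i<n. \<Sum>j<n. \<bar>X0 $$ (i, j)\<bar>) + 1)"
proof (rule ceig_norm_le[OF Y _ z], intro allI impI)
  fix i j assume ij: "i < n" "j < n"
  then show "\<bar>Y $$ (i, j)\<bar> \<le> (\<Sum>i<n. \<Sum>j<n. \<bar>X0 $$ (i, j)\<bar>) + 1"
    using abs_entry_le_sum_abs_entries[OF ij, of X0] close by force
qed

lemma eigenvalues_left_half_plane_stable:
  assumes X0: "X0 \<in> carrier_mat n n"
    and r: "complex_char_poly X0 = (\<Prod>i<n. [:- r i, 1:])"
    and i0: "i0 < n" "r i0 = 0" and neg: "\<forall>i<n. i \<noteq> i0 \<longrightarrow> Re (r i) < 0"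
  shows "\<exists>\<eta>>0. \<forall>Y\<in>carrier_mat n n. (\<forall>i<n. \<forall>j<n. \<bar>Y $$ (i, j) - X0 $$ (i, j)\<bar> < \<eta>)
    \<longrightarrow> det (- Y) > 0 \<longrightarrow> (\<forall>z. ceig Y z \<longrightarrow> Re z < 0)"
proof -
  define R where "R = n * ((\<Sum>i<n. \<Sum>j<n. \<bar>X0 $$ (i, j)\<bar>) + 1)"
  have R: "R \<ge> 0"
    unfolding R_def by (simp add: sum_nonneg)
  obtain \<delta> where \<delta>: "\<delta> > 0" and stable: "\<forall>q w. map_poly complex_of_real q = (\<Prod>i<n. [:- w i, 1:])
      \<longrightarrow> (\<forall>i<n. cmod (w i) \<le> R) \<longrightarrow> (\<forall>z. cmod z \<le> R + 1 \<longrightarrow>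
          cmod (poly (map_poly complex_of_real q) z - poly (complex_char_poly X0) z) \<le> \<delta>)
      \<longrightarrow> poly q 0 > 0 \<longrightarrow> (\<forall>i<n. Re (w i) < 0)"
    using roots_left_half_plane_stable[OF r[unfolded complex_char_poly_eq[OF X0]] i0 neg R]
    unfolding complex_char_poly_eq[OF X0] by blast
  obtain \<eta> where \<eta>: "\<eta> > 0" and poly_close: "\<forall>Y\<in>carrier_mat n n. (\<forall>i<n. \<forall>j<n. \<bar>Y $$ (i, j) - X0 $$ (i, j)\<bar> < \<eta>)
      \<longrightarrow> (\<forall>z. cmod z \<le> R + 1 \<longrightarrow> cmod (poly (complex_char_poly Y) z - poly (complex_char_poly X0) z) \<le> \<delta>)"
    using complex_char_poly_close[OF X0 _ \<delta>, of "R + 1"] R by auto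
  show ?thesis
  proof (intro exI[of _ "min 1 \<eta>"] conjI ballI impI allI)
    show "0 < min 1 \<eta>"
      using \<eta> by simp
    fix Y z
    assume Y: "Y \<in> carrier_mat n n" and close: "\<forall>i<n. \<forall>j<n. \<bar>Y $$ (i, j) - X0 $$ (i, j)\<bar> < min 1 \<eta>"
      and det_pos: "det (- Y) > 0" and z: "ceig Y z"
    obtain w where w: "complex_char_poly Y = (\<Prod>i<n. [:- w i, 1:])"
      using complex_char_poly_linear_factors[OF Y] .
    have ceig_w: "ceig Y \<zeta> \<longleftrightarrow> (\<exists>i<n. w i = \<zeta>)" for \<zeta>
      unfolding ceig_iff_root[OF Y] w using root_prod_linear_factors_iff[of "{..<n}" w] by auto
    have factors: "map_poly complex_of_real (char_poly Y) = (\<Prod>i<n. [:- w i, 1:])"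
      using w unfolding complex_char_poly_eq[OF Y] .
    have bounded: "\<forall>i<n. cmod (w i) \<le> R"
    proof (intro allI impI)
      fix i assume "i < n"
      then have "ceig Y (w i)"
        using ceig_w by blast
      moreover have "\<forall>i<n. \<forall>j<n. \<bar>Y $$ (i, j) - X0 $$ (i, j)\<bar> \<le> 1"
        using close by (auto intro: less_imp_le)
      ultimately show "cmod (w i) \<le> R"
        unfolding R_def using ceig_norm_le_if_close[OF X0 Y] by blast
    qed
    have near: "\<forall>\<zeta>. cmod \<zeta> \<le> R + 1 \<longrightarrow>
        cmod (poly (complex_char_poly Y) \<zeta> - poly (complex_char_poly X0) \<zeta>) \<le> \<delta>"
      using poly_close Y close by simp
    have "poly (char_poly Y) 0 > 0"
      unfolding poly_char_poly_0[OF Y] by (fact det_pos)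
    then have "\<forall>i<n. Re (w i) < 0"
      using stable factors bounded near[unfolded complex_char_poly_eq[OF Y]] by blast
    then show "Re z < 0"
      using z ceig_w by auto
  qed
qed

section \<open>Small and large wave numbers\<close>

lemma complex_char_poly_simple_zero_factors:
  fixes A :: "real mat"
  assumes A: "A \<in> carrier_mat n n" and singular: "det A = 0"
    and stable: "(\<Sum>z\<in>{z. ceig A z \<and> Re z < 0}. alg_mult A z) = n - 1"
  obtains r i0 where "complex_char_poly A = (\<Prod>i<n. [:- r i, 1:])"
    and "i0 < n" "r i0 = 0" "\<forall>i<n. i \<noteq> i0 \<longrightarrow> Re (r i) < 0"
proof -
  obtain r where r: "complex_char_poly A = (\<Prod>i<n. [:- r i, 1:])"
    using complex_char_poly_linear_factors[OF A] .
  have ceig_r: "ceig A z \<longleftrightarrow> (\<exists>i<n. r i = z)" for z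
    unfolding ceig_iff_root[OF A] r using root_prod_linear_factors_iff[of "{..<n}" r] by auto
  define I where "I = {i. i < n \<and> Re (r i) < 0}"
  have "card I = (\<Sum>z\<in>r ` I. card {i\<in>I. r i = z})"
    using card_eq_sum sum.image_gen[of I "\<lambda>_. 1 :: nat" r] unfolding I_def by simp
  also have "\<dots> = (\<Sum>z\<in>r ` I. alg_mult A z)"
  proof (rule sum.cong[OF refl])
    fix z assume "z \<in> r ` I"
    then have "{i\<in>I. r i = z} = {i\<in>{..<n}. r i = z}"
      unfolding I_def by auto
    then show "card {i\<in>I. r i = z} = alg_mult A z"
      unfolding alg_mult_def r order_prod_linear_factors[OF finite_lessThan] by simp
  qed
  also have "r ` I = {z. ceig A z \<and> Re z < 0}"
    unfolding I_def ceig_r by auto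
  finally have card_I: "card I = n - 1"
    using stable by simp
  have "poly (complex_char_poly A) 0 = 0"
    using poly_complex_char_poly_of_real[OF A, of 0] poly_char_poly_0[OF A] det_0_negate[OF A] singular
    by simp
  then obtain i0 where i0: "i0 < n" "r i0 = 0"
    using ceig_r ceig_iff_root[OF A] by metis
  have "I \<subseteq> {..<n} - {i0}"
    unfolding I_def using i0 by auto
  moreover have "card ({..<n} - {i0}) = n - 1"
    using i0 by simp
  ultimately have "I = {..<n} - {i0}"
    using card_I by (intro card_subset_eq) auto
  then show ?thesis
    using that[OF r i0] unfolding I_def by blast
qed

lemma abs_quadratic_quartic_le:
  fixes x y \<kappa> :: real
  assumes "0 < \<kappa>" "\<kappa> \<le> 1"
  shows "\<bar>\<kappa>^2 * x + \<kappa>^4 * y\<bar> \<le> \<kappa> * (\<bar>x\<bar> + \<bar>y\<bar>)"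
proof -
  have "\<kappa>^2 \<le> \<kappa>" "\<kappa>^4 \<le> \<kappa>"
    using assms by (simp_all add: power_le_one power_decreasing[of 1, simplified])
  then have "\<kappa>^2 * \<bar>x\<bar> + \<kappa>^4 * \<bar>y\<bar> \<le> \<kappa> * \<bar>x\<bar> + \<kappa> * \<bar>y\<bar>"
    by (intro add_mono mult_right_mono) auto
  then show ?thesis
    using abs_triangle_ineq[of "\<kappa>^2 * x" "\<kappa>^4 * y"] by (simp add: abs_mult distrib_left)
qed

lemma spectral_abscissa_neg_near_zero:
  fixes A J2 J4 :: "real mat"
  assumes A: "A \<in> carrier_mat n n" and J2: "J2 \<in> carrier_mat n n" and J4: "J4 \<in> carrier_mat n n"
    and n: "n \<ge> 1" and singular: "det A = 0"
    and stable: "(\<Sum>z\<in>{z. ceig A z \<and> Re z < 0}. alg_mult A z) = n - 1"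
  shows "\<exists>k>0. \<forall>\<kappa>. 0 < \<kappa> \<and> \<kappa> < k \<and> det (- (A + \<kappa>^2 \<cdot>\<^sub>m J2 + \<kappa>^4 \<cdot>\<^sub>m J4)) > 0
    \<longrightarrow> spectral_abscissa (A + \<kappa>^2 \<cdot>\<^sub>m J2 + \<kappa>^4 \<cdot>\<^sub>m J4) < 0"
proof -
  obtain r i0 where r: "complex_char_poly A = (\<Prod>i<n. [:- r i, 1:])"
    and i0: "i0 < n" "r i0 = 0" "\<forall>i<n. i \<noteq> i0 \<longrightarrow> Re (r i) < 0"
    using complex_char_poly_simple_zero_factors[OF A singular stable] .
  obtain \<eta> where \<eta>: "\<eta> > 0" and near: "\<forall>Y\<in>carrier_mat n n. (\<forall>i<n. \<forall>j<n. \<bar>Y $$ (i, j) - A $$ (i, j)\<bar> < \<eta>)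
      \<longrightarrow> det (- Y) > 0 \<longrightarrow> (\<forall>z. ceig Y z \<longrightarrow> Re z < 0)"
    using eigenvalues_left_half_plane_stable[OF A r i0] by blast
  define S where "S = (\<Sum>i<n. \<Sum>j<n. \<bar>J2 $$ (i, j)\<bar>) + (\<Sum>i<n. \<Sum>j<n. \<bar>J4 $$ (i, j)\<bar>) + 1"
  have S: "S \<ge> 1"
    unfolding S_def by (simp add: sum_nonneg)
  define k where "k = min 1 (\<eta> / S)"
  have k: "k > 0"
    unfolding k_def using \<eta> S by simp
  have "spectral_abscissa (A + \<kappa>^2 \<cdot>\<^sub>m J2 + \<kappa>^4 \<cdot>\<^sub>m J4) < 0"
    if \<kappa>: "0 < \<kappa>" "\<kappa> < k" and det_pos: "det (- (A + \<kappa>^2 \<cdot>\<^sub>m J2 + \<kappa>^4 \<cdot>\<^sub>m J4)) > 0" for \<kappa>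
  proof -
    let ?Y = "A + \<kappa>^2 \<cdot>\<^sub>m J2 + \<kappa>^4 \<cdot>\<^sub>m J4"
    have Y: "?Y \<in> carrier_mat n n"
      using A J2 J4 by simp
    have \<kappa>1: "\<kappa> \<le> 1" and \<kappa>S: "\<kappa> * S < \<eta>"
      using \<kappa> S unfolding k_def by (auto simp: pos_less_divide_eq)
    have "\<bar>?Y $$ (i, j) - A $$ (i, j)\<bar> < \<eta>" if ij: "i < n" "j < n" for i j
    proof -
      have "\<bar>?Y $$ (i, j) - A $$ (i, j)\<bar> = \<bar>\<kappa>^2 * J2 $$ (i, j) + \<kappa>^4 * J4 $$ (i, j)\<bar>"
        using A J2 J4 ij by simp
      also have "\<dots> \<le> \<kappa> * (\<bar>J2 $$ (i, j)\<bar> + \<bar>J4 $$ (i, j)\<bar>)"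
        by (rule abs_quadratic_quartic_le[OF \<kappa>(1) \<kappa>1])
      also have "\<dots> \<le> \<kappa> * S"
        using abs_entry_le_sum_abs_entries[OF ij, of J2] abs_entry_le_sum_abs_entries[OF ij, of J4] \<kappa>(1)
        unfolding S_def by (intro mult_left_mono) auto
      finally show ?thesis
        using \<kappa>S by linarith
    qed
    then have "\<forall>z. ceig ?Y z \<longrightarrow> Re z < 0"
      using near Y det_pos by blast
    then show ?thesis
      using spectral_abscissa_less_iff[OF Y n] by blast
  qed
  then show ?thesis
    using k by blast
qed

lemma qform_unit_vec:
  fixes M :: "real mat"
  assumes "M \<in> carrier_mat n n" "i < n"
  shows "qform M (unit_vec n i) = M $$ (i, i)"
proof -
  have "M *\<^sub>v unit_vec n i \<in> carrier_vec n"
    using assms by simp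
  then have "qform M (unit_vec n i) = (M *\<^sub>v unit_vec n i) $ i"
    unfolding qform_def using assms by (simp add: scalar_prod_left_unit)
  also have "\<dots> = M $$ (i, i)"
    using assms by (simp add: scalar_prod_def unit_vec_def sum.remove[of _ i] cong: if_cong)
  finally show ?thesis .
qed

lemma A2_diagonal_entries:
  assumes "A2 n (mat_diag n a) (mat_diag n b)"
  shows "\<forall>i<n. b i \<le> 0" and "\<exists>k. \<forall>i<n. k^2 * a i + k^4 * b i < 0"
proof -
  obtain k where semidef: "neg_semidef n (mat_diag n b)"
    and def: "neg_def n (k^2 \<cdot>\<^sub>m mat_diag n a + k^4 \<cdot>\<^sub>m mat_diag n b)"
    using assms unfolding A2_def by blast
  show "\<forall>i<n. b i \<le> 0"
  proof (intro allI impI)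
    fix i assume i: "i < n"
    have "qform (mat_diag n b) (unit_vec n i) \<le> 0"
      using semidef unfolding neg_semidef_def by simp
    then show "b i \<le> 0"
      using qform_unit_vec[of "mat_diag n b" n i] i by (simp add: mat_diag_def)
  qed
  have "k^2 * a i + k^4 * b i < 0" if i: "i < n" for i
  proof -
    have "unit_vec n i \<noteq> 0\<^sub>v n"
      using i by (metis index_unit_vec(1) index_zero_vec(1) less_irrefl zero_neq_one)
    then have "qform (k^2 \<cdot>\<^sub>m mat_diag n a + k^4 \<cdot>\<^sub>m mat_diag n b) (unit_vec n i) < 0"
      using def unit_vec_carrier[of n i] unfolding neg_def_def by blast
    then show ?thesis
      using qform_unit_vec[of "k^2 \<cdot>\<^sub>m mat_diag n a + k^4 \<cdot>\<^sub>m mat_diag n b" n i] i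
      by (simp add: mat_diag_def)
  qed
  then show "\<exists>k. \<forall>i<n. k^2 * a i + k^4 * b i < 0"
    by blast
qed

lemma spectral_abscissa_neg_if_diagonal_shift_below:
  fixes A :: "real mat"
  assumes A: "A \<in> carrier_mat n n" and n: "n \<ge> 1"
    and d: "\<forall>i<n. d i < - (\<Sum>i<n. \<Sum>j<n. \<bar>A $$ (i, j)\<bar>)"
  shows "spectral_abscissa (A + mat_diag n d) < 0"
proof (rule spectral_abscissa_neg_if_diagonally_dominant[OF _ n])
  show "A + mat_diag n d \<in> carrier_mat n n"
    using A by simp
  show "\<forall>i<n. (A + mat_diag n d) $$ (i, i) + (\<Sum>j\<in>{0..<n} - {i}. \<bar>(A + mat_diag n d) $$ (i, j)\<bar>) < 0"
  proof (intro allI impI)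
    fix i assume i: "i < n"
    have "(\<Sum>j\<in>{0..<n} - {i}. \<bar>(A + mat_diag n d) $$ (i, j)\<bar>) = (\<Sum>j\<in>{0..<n} - {i}. \<bar>A $$ (i, j)\<bar>)"
      using A i by (intro sum.cong) (auto simp: mat_diag_def)
    moreover have "(\<Sum>j<n. \<bar>A $$ (i, j)\<bar>) = \<bar>A $$ (i, i)\<bar> + (\<Sum>j\<in>{0..<n} - {i}. \<bar>A $$ (i, j)\<bar>)"
      using i by (subst sum.remove[of _ i]) (auto simp: atLeast0LessThan)
    moreover have "(A + mat_diag n d) $$ (i, i) = A $$ (i, i) + d i"
      using A i by (simp add: mat_diag_def)
    ultimately show "(A + mat_diag n d) $$ (i, i) + (\<Sum>j\<in>{0..<n} - {i}. \<bar>(A + mat_diag n d) $$ (i, j)\<bar>) < 0"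
      using sum_abs_row_le_sum_abs_entries[OF i, of A] abs_ge_self[of "A $$ (i, i)"] d i by fastforce
  qed
qed

lemma quadratic_quartic_le_scaled:
  fixes a b k \<kappa> :: real
  assumes b: "b \<le> 0" and k: "k \<noteq> 0" "k^2 \<le> \<kappa>^2"
  shows "\<kappa>^2 * a + \<kappa>^4 * b \<le> \<kappa>^2 / k^2 * (k^2 * a + k^4 * b)"
proof -
  define q where "q = \<kappa>^2 / k^2"
  have q: "1 \<le> q"
    unfolding q_def using k by simp
  have "\<kappa>^2 = q * k^2" "\<kappa>^4 = q^2 * k^4"
    unfolding q_def using k by (simp_all add: power_divide power_mult_distrib flip: power_mult)
  then have "\<kappa>^2 * a + \<kappa>^4 * b = q * (k^2 * a + k^4 * b) + (q^2 - q) * k^4 * b"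
    by (simp add: algebra_simps power2_eq_square)
  moreover have "(q^2 - q) * k^4 * b \<le> 0"
    using q b by (intro mult_nonneg_nonpos) (auto simp: power2_eq_square)
  ultimately show ?thesis
    unfolding q_def by linarith
qed

lemma spectral_abscissa_neg_far:
  fixes A :: "real mat" and a b :: "nat \<Rightarrow> real"
  assumes A: "A \<in> carrier_mat n n" and n: "n \<ge> 1"
    and b: "\<forall>i<n. b i \<le> 0" and s: "\<forall>i<n. k^2 * a i + k^4 * b i < 0"
  shows "\<exists>K. \<forall>\<kappa>\<ge>K. spectral_abscissa (A + \<kappa>^2 \<cdot>\<^sub>m mat_diag n a + \<kappa>^4 \<cdot>\<^sub>m mat_diag n b) < 0"
proof -
  have "\<forall>i\<in>{..<n}. k^2 * a i + k^4 * b i < 0"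
    using s by simp
  then obtain \<sigma> where \<sigma>: "\<sigma> > 0" and \<sigma>_le: "\<forall>i\<in>{..<n}. k^2 * a i + k^4 * b i \<le> - \<sigma>"
    using uniform_negative_bound[where f = "\<lambda>i. k^2 * a i + k^4 * b i", OF finite_lessThan] by blast
  define G where "G = (\<Sum>i<n. \<Sum>j<n. \<bar>A $$ (i, j)\<bar>)"
  have G: "G \<ge> 0"
    unfolding G_def by (simp add: sum_nonneg)
  have "k \<noteq> 0"
    using s n by force
  define K where "K = max 1 (k^2 * (G / \<sigma> + 1))"
  have "spectral_abscissa (A + \<kappa>^2 \<cdot>\<^sub>m mat_diag n a + \<kappa>^4 \<cdot>\<^sub>m mat_diag n b) < 0"
    if \<kappa>: "\<kappa> \<ge> K" for \<kappa>
  proof -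
    have "\<kappa> \<le> \<kappa>^2"
      using \<kappa> unfolding K_def by (simp add: power2_eq_square)
    then have \<kappa>2: "k^2 * (G / \<sigma> + 1) \<le> \<kappa>^2"
      using \<kappa> unfolding K_def by linarith
    then have q: "G / \<sigma> + 1 \<le> \<kappa>^2 / k^2"
      using \<open>k \<noteq> 0\<close> by (simp add: pos_le_divide_eq mult.commute)
    have "k^2 \<le> k^2 * (G / \<sigma> + 1)"
      using mult_left_mono[of 1 "G / \<sigma> + 1" "k^2"] G \<sigma> by simp
    then have "k^2 \<le> \<kappa>^2"
      using \<kappa>2 by linarith
    have "\<kappa>^2 * a i + \<kappa>^4 * b i < - G" if i: "i < n" for i
    proof -
      have "\<kappa>^2 * a i + \<kappa>^4 * b i \<le> \<kappa>^2 / k^2 * (k^2 * a i + k^4 * b i)"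
        using quadratic_quartic_le_scaled b i \<open>k \<noteq> 0\<close> \<open>k^2 \<le> \<kappa>^2\<close> by blast
      also have "\<dots> \<le> \<kappa>^2 / k^2 * (- \<sigma>)"
        using \<sigma>_le i by (intro mult_left_mono) auto
      also have "\<dots> \<le> - ((G / \<sigma> + 1) * \<sigma>)"
        using mult_right_mono[OF q less_imp_le[OF \<sigma>]] by simp
      also have "\<dots> = - G - \<sigma>"
        using \<sigma> by (simp add: field_simps)
      finally show ?thesis
        using \<sigma> by simp
    qed
    moreover have "A + \<kappa>^2 \<cdot>\<^sub>m mat_diag n a + \<kappa>^4 \<cdot>\<^sub>m mat_diag n b
        = A + mat_diag n (\<lambda>i. \<kappa>^2 * a i + \<kappa>^4 * b i)"
      using A by (intro eq_matI) (auto simp: mat_diag_def)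
    ultimately show ?thesis
      using spectral_abscissa_neg_if_diagonal_shift_below[OF A n] unfolding G_def by simp
  qed
  then show ?thesis
    by blast
qed

section \<open>Signs of polynomials in the wave number\<close>

lemma det_poly_in_kappa:
  fixes A J2 J4 :: "real mat"
  assumes A: "A \<in> carrier_mat n n" and J2: "J2 \<in> carrier_mat n n" and J4: "J4 \<in> carrier_mat n n"
  obtains P where "\<And>\<kappa>. det (- (A + \<kappa>^2 \<cdot>\<^sub>m J2 + \<kappa>^4 \<cdot>\<^sub>m J4)) = poly P \<kappa>"
proof
  fix \<kappa> :: real
  let ?P = "mat n n (\<lambda>(i, j). [:- A $$ (i, j), 0, - J2 $$ (i, j), 0, - J4 $$ (i, j):])"
  show "det (- (A + \<kappa>^2 \<cdot>\<^sub>m J2 + \<kappa>^4 \<cdot>\<^sub>m J4)) = poly (det ?P) \<kappa>"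
    by (rule poly_det_cong[of _ n, symmetric])
      (use A J2 J4 in \<open>auto simp: algebra_simps power2_eq_square power4_eq_xxxx\<close>)
qed

lemma poly_no_roots_right_of:
  fixes P :: "real poly"
  assumes "P \<noteq> 0"
  obtains e where "e > 0" "\<And>x. a < x \<Longrightarrow> x < a + e \<Longrightarrow> poly P x \<noteq> 0"
proof
  define Z where "Z = {x. poly P x = 0 \<and> a < x}"
  have Z: "finite Z"
    unfolding Z_def using poly_roots_finite[OF assms] by (rule rev_finite_subset) auto
  show "(if Z = {} then 1 else Min Z - a) > 0"
    using Z by (auto simp: Z_def)
  show "poly P x \<noteq> 0" if "a < x" "x < a + (if Z = {} then 1 else Min Z - a)" for x
    using that Z Min_le[OF Z, of x] by (auto simp: Z_def split: if_splits)
qed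

lemma poly_same_sign_if_no_roots:
  fixes P :: "real poly"
  assumes no_root: "\<And>z. l < z \<Longrightarrow> z < u \<Longrightarrow> poly P z \<noteq> 0"
    and x: "l < x" "x < u" and y: "l < y" "y < u"
  shows "poly P x * poly P y > 0"
proof (rule ccontr)
  assume "\<not> poly P x * poly P y > 0"
  moreover have "poly P x * poly P y \<noteq> 0"
    using no_root x y by simp
  ultimately have neg: "poly P x * poly P y < 0"
    by linarith
  then have "x \<noteq> y"
    by (metis not_square_less_zero)
  then obtain z where z: "min x y < z" "z < max x y" "poly P z = 0"
    using poly_IVT[of x y P] poly_IVT[of y x P] neg by (cases "x < y") (auto simp: mult.commute)
  have "l < z" "z < u"
    using x y z(1,2) by (auto simp: min_def max_def split: if_splits)
  with no_root z(3) show False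
    by blast
qed

lemma poly_sign_eventually_at_right:
  fixes P :: "real poly"
  shows "eventually (\<lambda>x. poly P x > 0) (at_right a) \<or> eventually (\<lambda>x. poly P x \<le> 0) (at_right a)"
proof (cases "P = 0")
  case False
  obtain e where e: "e > 0" and no_root: "\<And>x. a < x \<Longrightarrow> x < a + e \<Longrightarrow> poly P x \<noteq> 0"
    using poly_no_roots_right_of[OF False] by blast
  have "eventually (\<lambda>x. a < x \<and> x < a + e) (at_right a)"
    unfolding eventually_at_right_field using e by (intro exI[of _ "a + e"]) auto
  then have signs: "eventually (\<lambda>x. poly P x * poly P (a + e / 2) > 0) (at_right a)"
    by eventually_elim (use poly_same_sign_if_no_roots[OF no_root] e in auto)
  show ?thesis
  proof (cases "poly P (a + e / 2) > 0")
    case True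
    have "eventually (\<lambda>x. poly P x > 0) (at_right a)"
      using signs by eventually_elim (use True in \<open>auto simp: zero_less_mult_iff\<close>)
    then show ?thesis ..
  next
    case False
    have "eventually (\<lambda>x. poly P x \<le> 0) (at_right a)"
      using signs by eventually_elim (use False in \<open>auto simp: zero_less_mult_iff\<close>)
    then show ?thesis ..
  qed
qed simp

lemma initially_positive_iff_eventually:
  "initially_positive f \<longleftrightarrow> eventually (\<lambda>\<kappa>. f \<kappa> > 0) (at_right 0)"
  unfolding initially_positive_def eventually_at_right_field by auto

lemma neg_value_if_neg_sign_change:
  assumes "neg_sign_change f"
  shows "\<exists>k\<ge>0. f k < 0"
  using assms unfolding neg_sign_change_def by (meson le_less_trans less_imp_le)

section \<open>Multi-affinity of the determinant and the vertex principle\<close>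

lemma det_row_update_affine:
  fixes P :: "'a :: comm_ring_1 mat"
  assumes P: "P \<in> carrier_mat n n" and p: "p < n"
  shows "\<exists>c. \<forall>w. det (P + w \<cdot>\<^sub>m mat n n (\<lambda>(i, k). if i = p then v k else 0)) = det P + w * c"
proof (intro exI allI)
  fix w
  let ?R = "P + w \<cdot>\<^sub>m mat n n (\<lambda>(i, k). if i = p then v k else 0)"
  have R: "?R \<in> carrier_mat n n"
    using P by simp
  have "mat_delete ?R p k = mat_delete P p k" for k
    unfolding mat_delete_def using P p by (intro eq_matI) auto
  then have cofactor: "cofactor ?R p k = cofactor P p k" for k
    unfolding cofactor_def by simp
  have "det ?R = (\<Sum>k<n. ?R $$ (p, k) * cofactor ?R p k)"
    by (rule laplace_expansion_row[OF R p])
  also have "\<dots> = (\<Sum>k<n. (P $$ (p, k) + w * v k) * cofactor P p k)"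
    using P p by (intro sum.cong) (auto simp: cofactor)
  also have "\<dots> = det P + w * (\<Sum>k<n. v k * cofactor P p k)"
    unfolding laplace_expansion_row[OF P p]
    by (simp add: algebra_simps sum.distrib sum_distrib_left)
  finally show "det ?R = det P + w * (\<Sum>k<n. v k * cofactor P p k)" .
qed

lemma row_reduction_of_rank_one:
  fixes u v :: "nat \<Rightarrow> 'a :: field"
  assumes p: "p < n" "u p \<noteq> 0"
  obtains L where "L \<in> carrier_mat n n" "det L = 1"
    "L * mat n n (\<lambda>(i, k). u i * v k) = mat n n (\<lambda>(i, k). if i = p then u p * v k else 0)"
proof
  let ?U = "mat n n (\<lambda>(i, k). u i * v k)"
  define L where "L = mat n n (\<lambda>(i, k). (if i = k then 1 else 0) - (if k = p \<and> i \<noteq> p then u i / u p else 0))"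
  show L: "L \<in> carrier_mat n n"
    unfolding L_def by simp
  have L_mult: "(L * Z) $$ (i, k) = Z $$ (i, k) - (if i \<noteq> p then u i / u p * Z $$ (p, k) else 0)"
    if "Z \<in> carrier_mat n n" "i < n" "k < n" for Z i k
  proof -
    have "(L * Z) $$ (i, k) = (\<Sum>l\<in>{0..<n}. (if l = i then Z $$ (l, k) else 0)
        - (if i \<noteq> p then (if l = p then u i / u p * Z $$ (l, k) else 0) else 0))"
      using that unfolding L_def by (auto simp: scalar_prod_def intro!: sum.cong)
    also have "\<dots> = Z $$ (i, k) - (if i \<noteq> p then u i / u p * Z $$ (p, k) else 0)"
      using that p by (simp add: sum_subtractf sum.delta)
    finally show ?thesis .
  qed
  have "det L = (\<Sum>k<n. L $$ (p, k) * cofactor L p k)"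
    by (rule laplace_expansion_row[OF L p(1)])
  also have "\<dots> = cofactor L p p"
    using p unfolding L_def by (simp add: if_distrib[of "\<lambda>x. x * _"] sum.delta cong: if_cong)
  also have "mat_delete L p p = 1\<^sub>m (n - 1)"
    unfolding mat_delete_def L_def using p by (intro eq_matI) auto
  then have "cofactor L p p = 1"
    unfolding cofactor_def by simp
  finally show "det L = 1" .
  show "L * ?U = mat n n (\<lambda>(i, k). if i = p then u p * v k else 0)"
  proof (rule eq_matI)
    fix i k assume "i < dim_row (mat n n (\<lambda>(i, k). if i = p then u p * v k else 0))"
      "k < dim_col (mat n n (\<lambda>(i, k). if i = p then u p * v k else 0))"
    then have ik: "i < n" "k < n" by auto
    then show "(L * ?U) $$ (i, k) = mat n n (\<lambda>(i, k). if i = p then u p * v k else 0) $$ (i, k)"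
      using p by (subst L_mult) auto
  qed (use L in auto)
qed

lemma det_rank_one_update_affine:
  fixes P :: "'a :: field mat"
  assumes P: "P \<in> carrier_mat n n"
  shows "\<exists>c. \<forall>w. det (P + w \<cdot>\<^sub>m mat n n (\<lambda>(i, k). u i * v k)) = det P + w * c"
proof (cases "\<forall>i<n. u i = 0")
  case True
  then have "P + w \<cdot>\<^sub>m mat n n (\<lambda>(i, k). u i * v k) = P" for w
    using P by (intro eq_matI) auto
  then show ?thesis
    by simp
next
  case False
  then obtain p where p: "p < n" "u p \<noteq> 0" by blast
  let ?U = "mat n n (\<lambda>(i, k). u i * v k)"
  obtain L where L: "L \<in> carrier_mat n n" "det L = 1"
    and LU: "L * ?U = mat n n (\<lambda>(i, k). if i = p then u p * v k else 0)"
    using row_reduction_of_rank_one[of p n u v] p by blast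
  obtain c where c: "\<forall>w. det (L * P + w \<cdot>\<^sub>m mat n n (\<lambda>(i, k). if i = p then u p * v k else 0))
      = det (L * P) + w * c"
    using det_row_update_affine[OF mult_carrier_mat[OF L(1) P] p(1), where v = "\<lambda>k. u p * v k"] by blast
  have "det (P + w \<cdot>\<^sub>m ?U) = det P + w * c" for w
  proof -
    have "det (P + w \<cdot>\<^sub>m ?U) = det (L * (P + w \<cdot>\<^sub>m ?U))"
      using det_mult[OF L(1), of "P + w \<cdot>\<^sub>m ?U"] P L(2) by simp
    also have "L * (P + w \<cdot>\<^sub>m ?U) = L * P + w \<cdot>\<^sub>m (L * ?U)"
      using L(1) P by (simp add: mult_add_distrib_mat mult_smult_distrib[OF L(1), of ?U n])
    finally show ?thesis
      unfolding LU c[rule_format] using det_mult[OF L(1) P] L(2) by simp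
  qed
  then show ?thesis by blast
qed

lemma exists_vertex_le:
  fixes G :: "(nat \<Rightarrow> real) \<Rightarrow> real" and lo hi x :: "nat \<Rightarrow> real"
  assumes affine: "\<And>y j. j < N \<Longrightarrow> \<exists>\<alpha> \<beta>. \<forall>w. G (y(j := w)) = \<alpha> + w * \<beta>"
    and box: "\<forall>j<N. lo j \<le> x j \<and> x j \<le> hi j"
  shows "\<exists>y. (\<forall>j<N. y j \<in> {lo j, hi j}) \<and> G y \<le> G x"
proof -
  have "\<exists>y. (\<forall>j<k. y j \<in> {lo j, hi j}) \<and> (\<forall>j\<ge>k. y j = x j) \<and> G y \<le> G x" if "k \<le> N" for k
    using that
  proof (induction k)
    case (Suc k)
    then obtain y where y: "\<forall>j<k. y j \<in> {lo j, hi j}" "\<forall>j\<ge>k. y j = x j" "G y \<le> G x"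
      by auto
    have k: "k < N"
      using Suc.prems by simp
    obtain \<alpha> \<beta> where G_y: "\<And>w. G (y(k := w)) = \<alpha> + w * \<beta>"
      using affine[OF k] by blast
    define c where "c = (if \<beta> \<ge> 0 then lo k else hi k)"
    have "c * \<beta> \<le> y k * \<beta>"
      using box k y(2) unfolding c_def by (auto intro: mult_right_mono mult_right_mono_neg)
    then have "G (y(k := c)) \<le> G y"
      using G_y[of c] G_y[of "y k"] by simp
    show ?case
    proof (intro exI[of _ "y(k := c)"] conjI)
      show "\<forall>j<Suc k. (y(k := c)) j \<in> {lo j, hi j}"
        using y(1) unfolding c_def by (auto simp: less_Suc_eq)
      show "\<forall>j\<ge>Suc k. (y(k := c)) j = x j"
        using y(2) by simp
      show "G (y(k := c)) \<le> G x"
        using \<open>G (y(k := c)) \<le> G y\<close> y(3) by linarith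
    qed
  qed (intro exI[of _ x], simp)
  from this[of N] show ?thesis
    by auto
qed

lemma exists_vertex_ge:
  fixes G :: "(nat \<Rightarrow> real) \<Rightarrow> real" and lo hi x :: "nat \<Rightarrow> real"
  assumes affine: "\<And>y j. j < N \<Longrightarrow> \<exists>\<alpha> \<beta>. \<forall>w. G (y(j := w)) = \<alpha> + w * \<beta>"
    and box: "\<forall>j<N. lo j \<le> x j \<and> x j \<le> hi j"
  shows "\<exists>y. (\<forall>j<N. y j \<in> {lo j, hi j}) \<and> G x \<le> G y"
proof -
  have "\<exists>\<alpha> \<beta>. \<forall>w. - G (y(j := w)) = \<alpha> + w * \<beta>" if j: "j < N" for y j
  proof -
    obtain \<alpha> \<beta> where "\<forall>w. G (y(j := w)) = \<alpha> + w * \<beta>"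
      using affine[OF j] by blast
    then show ?thesis
      by (intro exI[of _ "- \<alpha>"] exI[of _ "- \<beta>"]) simp
  qed
  from exists_vertex_le[where G = "\<lambda>y. - G y", OF this box] show ?thesis
    by auto
qed

definition sysdet :: "int mat \<Rightarrow> int mat \<Rightarrow> nat \<Rightarrow> nat \<Rightarrow> real \<Rightarrow> (nat \<Rightarrow> real) \<Rightarrow> (nat \<Rightarrow> real)
    \<Rightarrow> (nat \<Rightarrow> real) \<Rightarrow> real" where
  "sysdet B C n m \<kappa> d a b = det (- sysmat B C (mat_diag m d) (mat_diag n a) (mat_diag n b) \<kappa>)"

lemma sysmat_carrier:
  assumes "B \<in> carrier_mat n m" "C \<in> carrier_mat m n" "\<Delta> \<in> carrier_mat m m"
    and "J2 \<in> carrier_mat n n" "J4 \<in> carrier_mat n n"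
  shows "sysmat B C \<Delta> J2 J4 \<kappa> \<in> carrier_mat n n"
  unfolding sysmat_def using assms by (intro add_carrier_mat mult_carrier_mat smult_carrier_mat) auto

lemma sysmat_diag_entry:
  assumes B: "B \<in> carrier_mat n m" and C: "C \<in> carrier_mat m n" and ik: "i < n" "k < n"
  shows "sysmat B C (mat_diag m d) (mat_diag n a) (mat_diag n b) \<kappa> $$ (i, k)
     = (\<Sum>l<m. real_of_int (B $$ (i, l)) * d l * real_of_int (C $$ (l, k)))
       + (if i = k then \<kappa>^2 * a i + \<kappa>^4 * b i else 0)"
proof -
  have "map_mat real_of_int B * mat_diag m d = mat n m (\<lambda>(i, l). map_mat real_of_int B $$ (i, l) * d l)"
    using mat_diag_mult_right[of "map_mat real_of_int B" n m d] B by simp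
  then have "(map_mat real_of_int B * mat_diag m d * map_mat real_of_int C) $$ (i, k)
      = (\<Sum>l<m. real_of_int (B $$ (i, l)) * d l * real_of_int (C $$ (l, k)))"
    using B C ik by (simp add: scalar_prod_def atLeast0LessThan)
  then show ?thesis
    unfolding sysmat_def using B C ik by (simp add: mat_diag_def)
qed

lemma sysdet_affine_in_coordinates:
  assumes B: "B \<in> carrier_mat n m" and C: "C \<in> carrier_mat m n"
  shows "j < m \<Longrightarrow> \<exists>\<alpha> \<beta>. \<forall>w. sysdet B C n m \<kappa> (d(j := w)) a b = \<alpha> + w * \<beta>"
    and "j < n \<Longrightarrow> \<exists>\<alpha> \<beta>. \<forall>w. sysdet B C n m \<kappa> d (a(j := w)) b = \<alpha> + w * \<beta>"
    and "j < n \<Longrightarrow> \<exists>\<alpha> \<beta>. \<forall>w. sysdet B C n m \<kappa> d a (b(j := w)) = \<alpha> + w * \<beta>"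
proof -
  have M: "dim_row (sysmat B C (mat_diag m d) (mat_diag n a) (mat_diag n b) \<kappa>) = n"
    "dim_col (sysmat B C (mat_diag m d) (mat_diag n a) (mat_diag n b) \<kappa>) = n" for d a b
    using sysmat_carrier[OF B C, of "mat_diag m d" "mat_diag n a" "mat_diag n b" \<kappa>] by auto
  have rank_one: "\<exists>\<alpha> \<beta>. \<forall>w. det (F w) = \<alpha> + w * \<beta>"
    if "\<And>w. F w = F 0 + w \<cdot>\<^sub>m mat n n (\<lambda>(i, k). u i * v k)" "F 0 \<in> carrier_mat n n"
    for F :: "real \<Rightarrow> real mat" and u v
    using det_rank_one_update_affine[OF that(2), of u v] that(1) by metis
  note entry = sysmat_diag_entry[OF B C]
  show "\<exists>\<alpha> \<beta>. \<forall>w. sysdet B C n m \<kappa> (d(j := w)) a b = \<alpha> + w * \<beta>" if j: "j < m"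
  proof -
    have sum_upd: "(\<Sum>l<m. f l * (if l = j then w else d l) * g l)
        = (\<Sum>l\<in>{..<m} - {j}. f l * d l * g l) + w * (f j * g j)"
      for f g :: "nat \<Rightarrow> real" and w
    proof -
      have "(\<Sum>l\<in>{..<m} - {j}. f l * (if l = j then w else d l) * g l) = (\<Sum>l\<in>{..<m} - {j}. f l * d l * g l)"
        by (intro sum.cong) auto
      then show ?thesis
        using j by (simp add: sum.remove[of "{..<m}" j])
    qed
    show ?thesis
      unfolding sysdet_def
      by (rule rank_one[where u = "\<lambda>i. - real_of_int (B $$ (i, j))" and v = "\<lambda>k. real_of_int (C $$ (j, k))"])
        (auto intro!: eq_matI simp: M entry sum_upd)
  qed
  show "\<exists>\<alpha> \<beta>. \<forall>w. sysdet B C n m \<kappa> d (a(j := w)) b = \<alpha> + w * \<beta>" if j: "j < n"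
    unfolding sysdet_def
    by (rule rank_one[where u = "\<lambda>i. if i = j then - (\<kappa>^2) else 0" and v = "\<lambda>k. if k = j then 1 else 0"])
      (auto intro!: eq_matI simp: M entry)
  show "\<exists>\<alpha> \<beta>. \<forall>w. sysdet B C n m \<kappa> d a (b(j := w)) = \<alpha> + w * \<beta>" if j: "j < n"
    unfolding sysdet_def
    by (rule rank_one[where u = "\<lambda>i. if i = j then - (\<kappa>^4) else 0" and v = "\<lambda>k. if k = j then 1 else 0"])
      (auto intro!: eq_matI simp: M entry)
qed

lemma mat_diag_cong: "(\<And>j. j < n \<Longrightarrow> f j = g j) \<Longrightarrow> mat_diag n f = mat_diag n g"
  unfolding mat_diag_def by (intro eq_matI) auto

lemma finite_vertD: "finite (vertD m Dlo Dhi)"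
proof (rule finite_subset)
  show "vertD m Dlo Dhi \<subseteq> mat_diag m ` (PiE {..<m} (\<lambda>j. {Dlo j, Dhi j}))"
  proof
    fix D assume "D \<in> vertD m Dlo Dhi"
    then obtain d where d: "D = mat_diag m d" "\<forall>j<m. d j \<in> {Dlo j, Dhi j}"
      unfolding vertD_def by blast
    have "D = mat_diag m (restrict d {..<m})"
      unfolding d(1) by (rule mat_diag_cong) simp
    moreover have "restrict d {..<m} \<in> PiE {..<m} (\<lambda>j. {Dlo j, Dhi j})"
      using d(2) by auto
    ultimately show "D \<in> mat_diag m ` (PiE {..<m} (\<lambda>j. {Dlo j, Dhi j}))"
      by blast
  qed
qed (simp add: finite_PiE)

lemma finite_vertJ: "finite (vertJ n alo ahi blo bhi)"
proof (rule finite_subset)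
  let ?A = "PiE {..<n} (\<lambda>i. {alo i, ahi i})" and ?B = "PiE {..<n} (\<lambda>i. {blo i, bhi i})"
  show "vertJ n alo ahi blo bhi \<subseteq> (\<lambda>(a, b). (mat_diag n a, mat_diag n b)) ` (?A \<times> ?B)"
  proof
    fix J assume "J \<in> vertJ n alo ahi blo bhi"
    then obtain a b where ab: "J = (mat_diag n a, mat_diag n b)"
      "\<forall>i<n. a i \<in> {alo i, ahi i} \<and> b i \<in> {blo i, bhi i}"
      unfolding vertJ_def by blast
    have "J = (mat_diag n (restrict a {..<n}), mat_diag n (restrict b {..<n}))"
      unfolding ab(1) by (auto intro!: mat_diag_cong)
    moreover have "(restrict a {..<n}, restrict b {..<n}) \<in> ?A \<times> ?B"
      using ab(2) by auto
    ultimately show "J \<in> (\<lambda>(a, b). (mat_diag n a, mat_diag n b)) ` (?A \<times> ?B)"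
      by (intro rev_image_eqI[of "(restrict a {..<n}, restrict b {..<n})"]) auto
  qed
qed (simp add: finite_PiE)

lemma mem_detvals_iff:
  "x \<in> detvals B C Ds Js \<kappa> \<longleftrightarrow> (\<exists>\<Delta> J2 J4. \<Delta> \<in> Ds \<and> (J2, J4) \<in> Js \<and> x = det (- sysmat B C \<Delta> J2 J4 \<kappa>))"
  unfolding detvals_def by blast

lemma detvals_eq_image:
  "detvals B C Ds Js \<kappa> = (\<lambda>(\<Delta>, J). det (- sysmat B C \<Delta> (fst J) (snd J) \<kappa>)) ` (Ds \<times> Js)"
  unfolding detvals_def by force

lemma sysdet_vertex_bounds:
  assumes B: "B \<in> carrier_mat n m" and C: "C \<in> carrier_mat m n"
    and d: "\<forall>j<m. Dlo j \<le> d j \<and> d j \<le> Dhi j"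
    and a: "\<forall>i<n. alo i \<le> a i \<and> a i \<le> ahi i" and b: "\<forall>i<n. blo i \<le> b i \<and> b i \<le> bhi i"
  shows "\<exists>d' a' b'. (\<forall>j<m. d' j \<in> {Dlo j, Dhi j}) \<and> (\<forall>i<n. a' i \<in> {alo i, ahi i} \<and> b' i \<in> {blo i, bhi i})
      \<and> sysdet B C n m \<kappa> d' a' b' \<le> sysdet B C n m \<kappa> d a b"
    and "\<exists>d' a' b'. (\<forall>j<m. d' j \<in> {Dlo j, Dhi j}) \<and> (\<forall>i<n. a' i \<in> {alo i, ahi i} \<and> b' i \<in> {blo i, bhi i})
      \<and> sysdet B C n m \<kappa> d a b \<le> sysdet B C n m \<kappa> d' a' b'"
proof -
  note affine = sysdet_affine_in_coordinates[OF B C]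
  obtain d1 where d1: "\<forall>j<m. d1 j \<in> {Dlo j, Dhi j}" "sysdet B C n m \<kappa> d1 a b \<le> sysdet B C n m \<kappa> d a b"
    using exists_vertex_le[where G = "\<lambda>d. sysdet B C n m \<kappa> d a b", OF affine(1) d] by blast
  obtain a1 where a1: "\<forall>i<n. a1 i \<in> {alo i, ahi i}" "sysdet B C n m \<kappa> d1 a1 b \<le> sysdet B C n m \<kappa> d1 a b"
    using exists_vertex_le[where G = "\<lambda>a. sysdet B C n m \<kappa> d1 a b", OF affine(2) a] by blast
  obtain b1 where b1: "\<forall>i<n. b1 i \<in> {blo i, bhi i}" "sysdet B C n m \<kappa> d1 a1 b1 \<le> sysdet B C n m \<kappa> d1 a1 b"
    using exists_vertex_le[where G = "\<lambda>b. sysdet B C n m \<kappa> d1 a1 b", OF affine(3) b] by blast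
  show "\<exists>d' a' b'. (\<forall>j<m. d' j \<in> {Dlo j, Dhi j}) \<and> (\<forall>i<n. a' i \<in> {alo i, ahi i} \<and> b' i \<in> {blo i, bhi i})
      \<and> sysdet B C n m \<kappa> d' a' b' \<le> sysdet B C n m \<kappa> d a b"
    using d1 a1 b1 by (intro exI[of _ d1] exI[of _ a1] exI[of _ b1]) auto
  obtain d2 where d2: "\<forall>j<m. d2 j \<in> {Dlo j, Dhi j}" "sysdet B C n m \<kappa> d a b \<le> sysdet B C n m \<kappa> d2 a b"
    using exists_vertex_ge[where G = "\<lambda>d. sysdet B C n m \<kappa> d a b", OF affine(1) d] by blast
  obtain a2 where a2: "\<forall>i<n. a2 i \<in> {alo i, ahi i}" "sysdet B C n m \<kappa> d2 a b \<le> sysdet B C n m \<kappa> d2 a2 b"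
    using exists_vertex_ge[where G = "\<lambda>a. sysdet B C n m \<kappa> d2 a b", OF affine(2) a] by blast
  obtain b2 where b2: "\<forall>i<n. b2 i \<in> {blo i, bhi i}" "sysdet B C n m \<kappa> d2 a2 b \<le> sysdet B C n m \<kappa> d2 a2 b2"
    using exists_vertex_ge[where G = "\<lambda>b. sysdet B C n m \<kappa> d2 a2 b", OF affine(3) b] by blast
  show "\<exists>d' a' b'. (\<forall>j<m. d' j \<in> {Dlo j, Dhi j}) \<and> (\<forall>i<n. a' i \<in> {alo i, ahi i} \<and> b' i \<in> {blo i, bhi i})
      \<and> sysdet B C n m \<kappa> d a b \<le> sysdet B C n m \<kappa> d' a' b'"
    using d2 a2 b2 by (intro exI[of _ d2] exI[of _ a2] exI[of _ b2]) auto
qed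

locale box_system =
  fixes n m :: nat and B C :: "int mat" and Dlo Dhi alo ahi blo bhi :: "nat \<Rightarrow> real"
  assumes B: "B \<in> carrier_mat n m" and C: "C \<in> carrier_mat m n"
    and D_le: "\<forall>j<m. Dlo j \<le> Dhi j" and J_le: "\<forall>i<n. alo i \<le> ahi i \<and> blo i \<le> bhi i"
begin

abbreviation "Ds \<equiv> boxD m Dlo Dhi"
abbreviation "Js \<equiv> boxJ n alo ahi blo bhi"
abbreviation "vertex_detvals \<kappa> \<equiv> detvals B C (vertD m Dlo Dhi) (vertJ n alo ahi blo bhi) \<kappa>"

lemma vertD_subset: "vertD m Dlo Dhi \<subseteq> Ds"
proof
  fix D assume "D \<in> vertD m Dlo Dhi"
  then obtain d where "D = mat_diag m d" "\<forall>j<m. d j \<in> {Dlo j, Dhi j}"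
    unfolding vertD_def by blast
  moreover have "\<forall>j<m. Dlo j \<le> d j \<and> d j \<le> Dhi j" if "\<forall>j<m. d j \<in> {Dlo j, Dhi j}" for d
    using that D_le by force
  ultimately show "D \<in> Ds"
    unfolding boxD_def by blast
qed

lemma vertJ_subset: "vertJ n alo ahi blo bhi \<subseteq> Js"
proof
  fix J assume "J \<in> vertJ n alo ahi blo bhi"
  then obtain a b where "J = (mat_diag n a, mat_diag n b)"
    "\<forall>i<n. a i \<in> {alo i, ahi i} \<and> b i \<in> {blo i, bhi i}"
    unfolding vertJ_def by blast
  moreover have "\<forall>i<n. alo i \<le> a i \<and> a i \<le> ahi i \<and> blo i \<le> b i \<and> b i \<le> bhi i"
    if "\<forall>i<n. a i \<in> {alo i, ahi i} \<and> b i \<in> {blo i, bhi i}" for a b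
    using that J_le by force
  ultimately show "J \<in> Js"
    unfolding boxJ_def by blast
qed

lemma finite_vertex_detvals: "finite (vertex_detvals \<kappa>)"
  unfolding detvals_eq_image using finite_vertD finite_vertJ by simp

lemma vertex_detvals_nonempty: "vertex_detvals \<kappa> \<noteq> {}"
proof -
  have "mat_diag m Dlo \<in> vertD m Dlo Dhi" "(mat_diag n alo, mat_diag n blo) \<in> vertJ n alo ahi blo bhi"
    unfolding vertD_def vertJ_def by blast+
  then show ?thesis
    unfolding detvals_def by blast
qed

lemma detvals_between_vertex_extrema:
  assumes "x \<in> detvals B C Ds Js \<kappa>"
  shows "Min (vertex_detvals \<kappa>) \<le> x \<and> x \<le> Max (vertex_detvals \<kappa>)"
proof -
  obtain d a b where d: "\<forall>j<m. Dlo j \<le> d j \<and> d j \<le> Dhi j"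
    and ab: "\<forall>i<n. alo i \<le> a i \<and> a i \<le> ahi i \<and> blo i \<le> b i \<and> b i \<le> bhi i"
    and x: "x = sysdet B C n m \<kappa> d a b"
    using assms unfolding detvals_def boxD_def boxJ_def sysdet_def by blast
  have a: "\<forall>i<n. alo i \<le> a i \<and> a i \<le> ahi i" and b: "\<forall>i<n. blo i \<le> b i \<and> b i \<le> bhi i"
    using ab by auto
  have vertex: "sysdet B C n m \<kappa> d' a' b' \<in> vertex_detvals \<kappa>"
    if "\<forall>j<m. d' j \<in> {Dlo j, Dhi j}" "\<forall>i<n. a' i \<in> {alo i, ahi i} \<and> b' i \<in> {blo i, bhi i}" for d' a' b'
    using that unfolding detvals_def vertD_def vertJ_def sysdet_def by blast
  obtain d1 a1 b1 where v1: "\<forall>j<m. d1 j \<in> {Dlo j, Dhi j}" "\<forall>i<n. a1 i \<in> {alo i, ahi i} \<and> b1 i \<in> {blo i, bhi i}"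
    and le: "sysdet B C n m \<kappa> d1 a1 b1 \<le> x"
    using sysdet_vertex_bounds(1)[OF B C d a b, of \<kappa>] x by auto
  obtain d2 a2 b2 where v2: "\<forall>j<m. d2 j \<in> {Dlo j, Dhi j}" "\<forall>i<n. a2 i \<in> {alo i, ahi i} \<and> b2 i \<in> {blo i, bhi i}"
    and ge: "x \<le> sysdet B C n m \<kappa> d2 a2 b2"
    using sysdet_vertex_bounds(2)[OF B C d a b, of \<kappa>] x by auto
  show ?thesis
    using Min_le[OF finite_vertex_detvals vertex[OF v1]] Max_ge[OF finite_vertex_detvals vertex[OF v2]] le ge
    by linarith
qed

lemma Psi_minus_eq_Min: "Psi_minus B C Ds Js \<kappa> = Min (vertex_detvals \<kappa>)"
  unfolding Psi_minus_def
proof (rule cInf_eq_minimum)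
  show "Min (vertex_detvals \<kappa>) \<in> detvals B C Ds Js \<kappa>"
    using Min_in[OF finite_vertex_detvals vertex_detvals_nonempty] vertD_subset vertJ_subset
    unfolding detvals_def by blast
qed (use detvals_between_vertex_extrema in blast)

lemma Psi_plus_eq_Max: "Psi_plus B C Ds Js \<kappa> = Max (vertex_detvals \<kappa>)"
  unfolding Psi_plus_def
proof (rule cSup_eq_maximum)
  show "Max (vertex_detvals \<kappa>) \<in> detvals B C Ds Js \<kappa>"
    using Max_in[OF finite_vertex_detvals vertex_detvals_nonempty] vertD_subset vertJ_subset
    unfolding detvals_def by blast
qed (use detvals_between_vertex_extrema in blast)

lemma Psi_bounds:
  assumes "\<Delta> \<in> Ds" "(J2, J4) \<in> Js"
  shows "Psi_minus B C Ds Js \<kappa> \<le> det (- sysmat B C \<Delta> J2 J4 \<kappa>)"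
    and "det (- sysmat B C \<Delta> J2 J4 \<kappa>) \<le> Psi_plus B C Ds Js \<kappa>"
  using detvals_between_vertex_extrema[of "det (- sysmat B C \<Delta> J2 J4 \<kappa>)" \<kappa>] assms
  unfolding Psi_minus_eq_Min Psi_plus_eq_Max mem_detvals_iff by blast+

lemma Psi_minus_attained:
  "\<exists>\<Delta> J2 J4. \<Delta> \<in> vertD m Dlo Dhi \<and> (J2, J4) \<in> vertJ n alo ahi blo bhi
    \<and> Psi_minus B C Ds Js \<kappa> = det (- sysmat B C \<Delta> J2 J4 \<kappa>)"
  using Min_in[OF finite_vertex_detvals vertex_detvals_nonempty, of \<kappa>]
  unfolding Psi_minus_eq_Min mem_detvals_iff .

lemma Psi_plus_attained:
  "\<exists>\<Delta> J2 J4. \<Delta> \<in> vertD m Dlo Dhi \<and> (J2, J4) \<in> vertJ n alo ahi blo bhi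
    \<and> Psi_plus B C Ds Js \<kappa> = det (- sysmat B C \<Delta> J2 J4 \<kappa>)"
  using Max_in[OF finite_vertex_detvals vertex_detvals_nonempty, of \<kappa>]
  unfolding Psi_plus_eq_Max mem_detvals_iff .

lemma sysmat_carrier_box:
  assumes "\<Delta> \<in> Ds" "(J2, J4) \<in> Js"
  shows "sysmat B C \<Delta> J2 J4 \<kappa> \<in> carrier_mat n n"
  using assms by (auto simp: boxD_def boxJ_def intro!: sysmat_carrier[OF B C])

lemma coupling_carrier:
  assumes "\<Delta> \<in> Ds"
  shows "map_mat real_of_int B * \<Delta> * map_mat real_of_int C \<in> carrier_mat n n"
  using assms B C unfolding boxD_def
  by (auto intro!: mult_carrier_mat[of _ n m _ n] mult_carrier_mat[of _ n m _ m])

lemma det_sysmat_poly: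
  assumes "\<Delta> \<in> Ds" "(J2, J4) \<in> Js"
  obtains P where "\<And>\<kappa>. det (- sysmat B C \<Delta> J2 J4 \<kappa>) = poly P \<kappa>"
proof -
  have "J2 \<in> carrier_mat n n" "J4 \<in> carrier_mat n n"
    using assms(2) by (auto simp: boxJ_def)
  from det_poly_in_kappa[OF coupling_carrier[OF assms(1)] this] that show ?thesis
    unfolding sysmat_def by blast
qed

lemma initially_positive_vertex_if_Psi_plus:
  assumes "initially_positive (Psi_plus B C Ds Js)"
  shows "\<exists>\<Delta>\<in>vertD m Dlo Dhi. \<exists>(J2, J4)\<in>vertJ n alo ahi blo bhi.
    initially_positive (\<lambda>\<kappa>. det (- sysmat B C \<Delta> J2 J4 \<kappa>))"
proof (rule ccontr)
  let ?W = "vertD m Dlo Dhi \<times> vertJ n alo ahi blo bhi"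
  let ?f = "\<lambda>(\<Delta>, J2, J4) \<kappa>. det (- sysmat B C \<Delta> J2 J4 \<kappa>)"
  assume no_vertex: "\<not> ?thesis"
  have "eventually (\<lambda>\<kappa>. ?f w \<kappa> \<le> 0) (at_right 0)" if vertex: "w \<in> ?W" for w
  proof -
    obtain \<Delta> J2 J4 where w: "w = (\<Delta>, J2, J4)" "\<Delta> \<in> vertD m Dlo Dhi" "(J2, J4) \<in> vertJ n alo ahi blo bhi"
      using vertex by (cases w) auto
    then obtain P where P: "\<And>\<kappa>. det (- sysmat B C \<Delta> J2 J4 \<kappa>) = poly P \<kappa>"
      using det_sysmat_poly vertD_subset vertJ_subset by blast
    have "\<not> eventually (\<lambda>\<kappa>. det (- sysmat B C \<Delta> J2 J4 \<kappa>) > 0) (at_right 0)"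
      using no_vertex w(2,3) unfolding initially_positive_iff_eventually by blast
    then have "\<not> eventually (\<lambda>\<kappa>. poly P \<kappa> > 0) (at_right 0)"
      unfolding P .
    then show ?thesis
      using poly_sign_eventually_at_right[of P 0] unfolding w(1) by (simp add: P)
  qed
  then have "eventually (\<lambda>\<kappa>. \<forall>w\<in>?W. ?f w \<kappa> \<le> 0) (at_right 0)"
    using finite_vertD finite_vertJ by (intro eventually_ball_finite) auto
  moreover have "eventually (\<lambda>\<kappa>. Psi_plus B C Ds Js \<kappa> > 0) (at_right 0)"
    using assms unfolding initially_positive_iff_eventually .
  ultimately obtain \<kappa> where \<kappa>: "\<forall>w\<in>?W. ?f w \<kappa> \<le> 0" "Psi_plus B C Ds Js \<kappa> > 0"
    using eventually_happens'[OF trivial_limit_at_right_real] eventually_conj by blast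
  obtain \<Delta> J2 J4 where "\<Delta> \<in> vertD m Dlo Dhi" "(J2, J4) \<in> vertJ n alo ahi blo bhi"
    "Psi_plus B C Ds Js \<kappa> = det (- sysmat B C \<Delta> J2 J4 \<kappa>)"
    using Psi_plus_attained by blast
  with \<kappa> show False
    by fastforce
qed

end

locale uncertain_system = box_system +
  assumes n_pos: "n \<ge> 1"
    and A1: "A1 n m B C (boxD m Dlo Dhi)"
    and A2: "\<forall>(J2, J4)\<in>boxJ n alo ahi blo bhi. A2 n J2 J4"
begin

lemma det_uminus_sysmat_0:
  assumes D: "\<Delta> \<in> Ds" and J: "(J2, J4) \<in> Js"
  shows "det (- sysmat B C \<Delta> J2 J4 0) = 0"
proof -
  define A where "A = map_mat real_of_int B * \<Delta> * map_mat real_of_int C"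
  have "J2 \<in> carrier_mat n n" "J4 \<in> carrier_mat n n"
    using J unfolding boxJ_def by auto
  then have "sysmat B C \<Delta> J2 J4 0 = A"
    unfolding sysmat_def A_def[symmetric] using coupling_carrier[OF D, folded A_def]
    by (intro eq_matI) auto
  moreover have "det A = 0"
    using A1 D unfolding A1_def A_def Let_def by blast
  ultimately show ?thesis
    using det_0_negate[OF coupling_carrier[OF D, folded A_def]] by simp
qed

lemma rho_neg_near_zero:
  assumes D: "\<Delta> \<in> Ds" and J: "(J2, J4) \<in> Js"
  shows "\<exists>k>0. \<forall>\<kappa>. 0 < \<kappa> \<and> \<kappa> < k \<and> det (- sysmat B C \<Delta> J2 J4 \<kappa>) > 0 \<longrightarrow> rho B C \<Delta> J2 J4 \<kappa> < 0"
proof -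
  let ?A = "map_mat real_of_int B * \<Delta> * map_mat real_of_int C"
  have J_carrier: "J2 \<in> carrier_mat n n" "J4 \<in> carrier_mat n n"
    using J unfolding boxJ_def by auto
  have "det ?A = 0" and "(\<Sum>z\<in>{z. ceig ?A z \<and> Re z < 0}. alg_mult ?A z) = n - 1"
    using A1 D unfolding A1_def Let_def by blast+
  from spectral_abscissa_neg_near_zero[OF coupling_carrier[OF D] J_carrier n_pos this] show ?thesis
    unfolding rho_def sysmat_def .
qed

lemma rho_neg_far:
  assumes D: "\<Delta> \<in> Ds" and J: "(J2, J4) \<in> Js"
  shows "\<exists>K. \<forall>\<kappa>\<ge>K. rho B C \<Delta> J2 J4 \<kappa> < 0"
proof -
  obtain a b where J24: "J2 = mat_diag n a" "J4 = mat_diag n b"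
    using J unfolding boxJ_def by blast
  then have A2_J: "A2 n (mat_diag n a) (mat_diag n b)"
    using A2 J by blast
  obtain k where "\<forall>i<n. k^2 * a i + k^4 * b i < 0"
    using A2_diagonal_entries(2)[OF A2_J] by blast
  from spectral_abscissa_neg_far[OF coupling_carrier[OF D] n_pos A2_diagonal_entries(1)[OF A2_J] this]
  show ?thesis
    unfolding rho_def sysmat_def J24 .
qed

lemma microphase_if_det_sign_change:
  assumes D: "\<Delta> \<in> Ds" and J: "(J2, J4) \<in> Js"
    and pos: "initially_positive (\<lambda>\<kappa>. det (- sysmat B C \<Delta> J2 J4 \<kappa>))"
    and neg: "k2 \<ge> 0" "det (- sysmat B C \<Delta> J2 J4 k2) < 0"
  shows "microphase B C \<Delta> J2 J4"
proof -
  obtain e where e: "e > 0" and det_pos: "\<forall>\<kappa>. 0 < \<kappa> \<and> \<kappa> < e \<longrightarrow> det (- sysmat B C \<Delta> J2 J4 \<kappa>) > 0"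
    using pos unfolding initially_positive_def by blast
  obtain k0 where k0: "k0 > 0"
    and near_zero: "\<forall>\<kappa>. 0 < \<kappa> \<and> \<kappa> < k0 \<and> det (- sysmat B C \<Delta> J2 J4 \<kappa>) > 0 \<longrightarrow> rho B C \<Delta> J2 J4 \<kappa> < 0"
    using rho_neg_near_zero[OF D J] by blast
  obtain K where far: "\<forall>\<kappa>\<ge>K. rho B C \<Delta> J2 J4 \<kappa> < 0"
    using rho_neg_far[OF D J] by blast
  have "e \<le> k2"
  proof (rule ccontr)
    assume "\<not> e \<le> k2"
    moreover have "k2 \<noteq> 0"
      using neg(2) det_uminus_sysmat_0[OF D J] by auto
    ultimately have "0 < k2 \<and> k2 < e"
      using neg(1) by auto
    then show False
      using det_pos neg(2) by force
  qed
  have "rho B C \<Delta> J2 J4 k2 > 0"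
    unfolding rho_def
    by (rule spectral_abscissa_pos_if_det_uminus_neg[OF sysmat_carrier_box[OF D J] n_pos neg(2)])
  moreover have "rho B C \<Delta> J2 J4 (max K (k2 + 1)) < 0"
    using far by simp
  moreover have "\<forall>\<kappa>. 0 < \<kappa> \<and> \<kappa> < min k0 (e / 2) \<longrightarrow> rho B C \<Delta> J2 J4 \<kappa> < 0"
    using near_zero det_pos by simp
  moreover have "0 < min k0 (e / 2)" "min k0 (e / 2) < k2" "k2 < max K (k2 + 1)"
    using k0 e \<open>e \<le> k2\<close> by auto
  ultimately show ?thesis
    unfolding microphase_def by blast
qed

lemma det_initially_positive_if_microphase:
  assumes "\<Delta> \<in> Ds" "(J2, J4) \<in> Js" "microphase B C \<Delta> J2 J4"
  shows "initially_positive (\<lambda>\<kappa>. det (- sysmat B C \<Delta> J2 J4 \<kappa>))"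
  using assms(3) det_uminus_pos_if_spectral_abscissa_neg[OF sysmat_carrier_box[OF assms(1,2)] n_pos]
  unfolding microphase_def initially_positive_def rho_def by blast

lemma Psi_plus_initially_positive_if_microphase:
  assumes "\<Delta> \<in> Ds" "(J2, J4) \<in> Js" "microphase B C \<Delta> J2 J4"
  shows "initially_positive (Psi_plus B C Ds Js)"
  using det_initially_positive_if_microphase[OF assms] Psi_bounds(2)[OF assms(1,2)]
  unfolding initially_positive_def by (meson less_le_trans)

lemma microphase_if_Psi_minus_sign_change:
  assumes "initially_positive (Psi_minus B C Ds Js)" and "neg_sign_change (Psi_minus B C Ds Js)"
  shows "\<exists>\<Delta>\<in>Ds. \<exists>(J2, J4)\<in>Js. microphase B C \<Delta> J2 J4"
proof -
  obtain k2 where k2: "k2 \<ge> 0" "Psi_minus B C Ds Js k2 < 0"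
    using neg_value_if_neg_sign_change[OF assms(2)] by blast
  obtain \<Delta> J2 J4 where vertex: "\<Delta> \<in> vertD m Dlo Dhi" "(J2, J4) \<in> vertJ n alo ahi blo bhi"
    and attained: "Psi_minus B C Ds Js k2 = det (- sysmat B C \<Delta> J2 J4 k2)"
    using Psi_minus_attained by blast
  then have box: "\<Delta> \<in> Ds" "(J2, J4) \<in> Js"
    using vertD_subset vertJ_subset by auto
  have "initially_positive (\<lambda>\<kappa>. det (- sysmat B C \<Delta> J2 J4 \<kappa>))"
    using assms(1) Psi_bounds(1)[OF box] unfolding initially_positive_def by (meson less_le_trans)
  then have "microphase B C \<Delta> J2 J4"
    using microphase_if_det_sign_change[OF box _ k2(1)] k2(2) attained by simp
  with box show ?thesis
    by blast
qed

lemma microphase_if_Psi_plus_sign_change: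
  assumes "initially_positive (Psi_plus B C Ds Js)" and "neg_sign_change (Psi_plus B C Ds Js)"
  shows "\<exists>\<Delta>\<in>Ds. \<exists>(J2, J4)\<in>Js. microphase B C \<Delta> J2 J4"
proof -
  obtain k2 where k2: "k2 \<ge> 0" "Psi_plus B C Ds Js k2 < 0"
    using neg_value_if_neg_sign_change[OF assms(2)] by blast
  obtain \<Delta> J2 J4 where vertex: "\<Delta> \<in> vertD m Dlo Dhi" "(J2, J4) \<in> vertJ n alo ahi blo bhi"
    and pos: "initially_positive (\<lambda>\<kappa>. det (- sysmat B C \<Delta> J2 J4 \<kappa>))"
    using initially_positive_vertex_if_Psi_plus[OF assms(1)] by blast
  then have box: "\<Delta> \<in> Ds" "(J2, J4) \<in> Js"
    using vertD_subset vertJ_subset by auto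
  have "microphase B C \<Delta> J2 J4"
    using microphase_if_det_sign_change[OF box pos k2(1)] Psi_bounds(2)[OF box, of k2] k2(2) by simp
  with box show ?thesis
    by blast
qed

lemma microphase_everywhere_if_Psi_minus_pos_Psi_plus_sign_change:
  assumes "initially_positive (Psi_minus B C Ds Js)" and "neg_sign_change (Psi_plus B C Ds Js)"
    and box: "\<Delta> \<in> Ds" "(J2, J4) \<in> Js"
  shows "microphase B C \<Delta> J2 J4"
proof -
  obtain k2 where k2: "k2 \<ge> 0" "Psi_plus B C Ds Js k2 < 0"
    using neg_value_if_neg_sign_change[OF assms(2)] by blast
  have "initially_positive (\<lambda>\<kappa>. det (- sysmat B C \<Delta> J2 J4 \<kappa>))"
    using assms(1) Psi_bounds(1)[OF box] unfolding initially_positive_def by (meson less_le_trans)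
  then show ?thesis
    using microphase_if_det_sign_change[OF box _ k2(1)] Psi_bounds(2)[OF box, of k2] k2(2) by simp
qed

end

theorem corollary1:
  fixes n m :: nat and B C :: "int mat"
    and Dlo Dhi :: "nat \<Rightarrow> real" and alo ahi blo bhi :: "nat \<Rightarrow> real"
  defines "Ds \<equiv> boxD m Dlo Dhi" and "Js \<equiv> boxJ n alo ahi blo bhi"
  assumes "n \<ge> 1" and "m \<ge> 1"
    and "B \<in> carrier_mat n m" and "C \<in> carrier_mat m n"
    and "\<forall>j<m. 0 \<le> Dlo j \<and> Dlo j \<le> Dhi j"
    and "\<forall>i<n. alo i \<le> ahi i \<and> blo i \<le> bhi i"
    and "A1 n m B C Ds"
    and "\<forall>(J2, J4)\<in>Js. A2 n J2 J4"
  shows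
    "((\<exists>\<Delta>\<in>Ds. \<exists>(J2, J4)\<in>Js. microphase B C \<Delta> J2 J4)
        \<longrightarrow> initially_positive (Psi_plus B C Ds Js)) \<and>
     ((initially_positive (Psi_minus B C Ds Js) \<and> neg_sign_change (Psi_minus B C Ds Js)) \<or>
      (initially_positive (Psi_plus B C Ds Js) \<and> neg_sign_change (Psi_plus B C Ds Js))
        \<longrightarrow> (\<exists>\<Delta>\<in>Ds. \<exists>(J2, J4)\<in>Js. microphase B C \<Delta> J2 J4)) \<and>
     (initially_positive (Psi_minus B C Ds Js) \<and> neg_sign_change (Psi_plus B C Ds Js)
        \<longrightarrow> (\<forall>\<Delta>\<in>Ds. \<forall>(J2, J4)\<in>Js. microphase B C \<Delta> J2 J4)) \<and>
     (\<forall>\<kappa>\<ge>0.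
        Psi_minus B C Ds Js \<kappa> = Min (detvals B C (vertD m Dlo Dhi) (vertJ n alo ahi blo bhi) \<kappa>) \<and>
        Psi_plus B C Ds Js \<kappa> = Max (detvals B C (vertD m Dlo Dhi) (vertJ n alo ahi blo bhi) \<kappa>))"
proof -
  \<comment> \<open>Not needed: \<open>m \<ge> 1\<close>, \<open>0 \<le> Dlo j\<close>, the left null vector in (A1), and the
    symmetry and indefiniteness conditions in (A2).\<close>
  interpret uncertain_system n m B C Dlo Dhi alo ahi blo bhi
    using assms unfolding Ds_def Js_def by unfold_locales auto
  show ?thesis
    unfolding Ds_def Js_def
    using Psi_plus_initially_positive_if_microphase microphase_if_Psi_minus_sign_change
      microphase_if_Psi_plus_sign_change microphase_everywhere_if_Psi_minus_pos_Psi_plus_sign_change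
      Psi_minus_eq_Min Psi_plus_eq_Max
    by blast
qed

end
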